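(* For every measurable nest $\{E_k\}_{k\ge1}$ there exist a measurable nest $\{\hat E_k\}_{k\ge1}$ and functions $\{\chi_k\}_{k\ge1}\subset\mathbb D$ such that for every $k$: $\hat E_k\subset E_k$, $0\le\chi_k\le1$ on $E$, $\chi_k=1$ on $\hat E_k$, and $\chi_k=0$ on $E\setminus E_k$ ($\mu$-a.e.).
   Context: $(E,\mathcal B,\mu)$ is a $\sigma$-finite measure space, $H$ a real separable Hilbert space, $\mathbb D$ a dense subspace of $L^2(\mu)$ and $D:\mathbb D\to L^2(\mu;H)$ a closed linear operator with the derivation property (for $f_1,\dots,f_m\in\mathbb D$ and $F\in C^1(\mathbb R^m)$ with bounded first derivatives and $F(0)=0$: $F(f_1,\dots,f_m)\in\mathbb D$, $DF(f_1,\dots,f_m)=\sum_j\partial_jF(\cdots)Df_j$). $\mathbb D$ carries the Hilbert norm $\mathcal E^0_1(f)^{1/2}=(\frac12\|Df\|_2^2+\|f\|_2^2)^{1/2}$. $\mathbb D_A=\{f\in\mathbb D:f=0\ \mu\text{-a.e. on }E\setminus A\}$. A measurable nest is an increasing sequence $\{E_k\}$ in $\mathcal B$ such that (i) for every $k$ there is $h_k\in\mathbb D$ with $h_k\ge1$ a.e. on $E_k$ and (ii) $\bigcup_k\mathbb D_{E_k}$ is dense in $\mathbb D$. *)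

theory Defs
  imports "HOL-Analysis.Analysis"
begin

text \<open>Elements of L^2(mu) are represented by measurable real functions, elements of
  L^2(mu;H) by measurable H-valued functions; equality in L^2 is equality mu-a.e.
  The domain Dom is a set of representatives (closed under a.e. modification).\<close>

definition sq_int :: "'a measure \<Rightarrow> ('a \<Rightarrow> real) \<Rightarrow> bool" where
  "sq_int M f \<longleftrightarrow> f \<in> borel_measurable M \<and> integrable M (\<lambda>x. (f x)\<^sup>2)"

definition vsq_int :: "'a measure \<Rightarrow> ('a \<Rightarrow> 'h::{real_inner,banach,second_countable_topology}) \<Rightarrow> bool" where
  "vsq_int M G \<longleftrightarrow> G \<in> borel_measurable M \<and> integrable M (\<lambda>x. (norm (G x))\<^sup>2)"

definition vec_of :: "nat \<Rightarrow> (nat \<Rightarrow> 'a \<Rightarrow> real) \<Rightarrow> 'a \<Rightarrow> (nat \<Rightarrow> real)" where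
  "vec_of m fs x = (\<lambda>j. if j < m then fs j x else 0)"

definition Rm :: "nat \<Rightarrow> (nat \<Rightarrow> real) set" where
  "Rm m = {x. \<forall>i\<ge>m. x i = 0}"

definition C1_bdd :: "nat \<Rightarrow> ((nat \<Rightarrow> real) \<Rightarrow> real) \<Rightarrow> (nat \<Rightarrow> (nat \<Rightarrow> real) \<Rightarrow> real) \<Rightarrow> bool" where
  "C1_bdd m F dF \<longleftrightarrow>
     (\<forall>x\<in>Rm m. \<forall>j<m. ((\<lambda>t. F (x(j := t))) has_real_derivative dF j x) (at (x j))) \<and>
     (\<forall>j<m. continuous_on (Rm m) (dF j)) \<and>
     (\<forall>j<m. \<exists>B. \<forall>x\<in>Rm m. \<bar>dF j x\<bar> \<le> B)"

definition L2dist2 :: "'a measure \<Rightarrow> ('a \<Rightarrow> real) \<Rightarrow> ('a \<Rightarrow> real) \<Rightarrow> real" where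
  "L2dist2 M f g = integral\<^sup>L M (\<lambda>x. (f x - g x)\<^sup>2)"

definition L2Hdist2 :: "'a measure \<Rightarrow> ('a \<Rightarrow> 'h::{real_inner,banach,second_countable_topology}) \<Rightarrow> ('a \<Rightarrow> 'h) \<Rightarrow> real" where
  "L2Hdist2 M F G = integral\<^sup>L M (\<lambda>x. (norm (F x - G x))\<^sup>2)"

definition standing ::
  "'a measure \<Rightarrow> ('a \<Rightarrow> real) set \<Rightarrow> (('a \<Rightarrow> real) \<Rightarrow> ('a \<Rightarrow> 'h::{real_inner,banach,second_countable_topology})) \<Rightarrow> bool" where
  "standing M Dom D \<longleftrightarrow>
     sigma_finite_measure M \<and>
     (\<forall>f\<in>Dom. sq_int M f \<and> vsq_int M (D f)) \<and>
     \<comment> \<open>Dom is a set of L^2 representatives, D well defined on classes\<close>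
     (\<forall>f\<in>Dom. \<forall>g. g \<in> borel_measurable M \<and> (AE x in M. f x = g x) \<longrightarrow>
        g \<in> Dom \<and> (AE x in M. D g x = D f x)) \<and>
     \<comment> \<open>linear subspace, D linear\<close>
     (\<lambda>x. 0) \<in> Dom \<and>
     (\<forall>f\<in>Dom. \<forall>g\<in>Dom. (\<lambda>x. f x + g x) \<in> Dom \<and>
        (AE x in M. D (\<lambda>x. f x + g x) x = D f x + D g x)) \<and>
     (\<forall>f\<in>Dom. \<forall>c::real. (\<lambda>x. c * f x) \<in> Dom \<and>
        (AE x in M. D (\<lambda>x. c * f x) x = c *\<^sub>R D f x)) \<and>
     \<comment> \<open>dense in L^2(mu)\<close>
     (\<forall>g. sq_int M g \<longrightarrow> (\<forall>\<epsilon>>0. \<exists>f\<in>Dom. L2dist2 M f g < \<epsilon>)) \<and>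
     \<comment> \<open>closed operator\<close>
     (\<forall>fs f G. (\<forall>n. fs n \<in> Dom) \<and> sq_int M f \<and> vsq_int M G \<and>
        (\<lambda>n. L2dist2 M (fs n) f) \<longlonglongrightarrow> 0 \<and> (\<lambda>n. L2Hdist2 M (D (fs n)) G) \<longlonglongrightarrow> 0
        \<longrightarrow> f \<in> Dom \<and> (AE x in M. D f x = G x)) \<and>
     \<comment> \<open>derivation property\<close>
     (\<forall>m fs F dF. (\<forall>j<m. fs j \<in> Dom) \<and> C1_bdd m F dF \<and> F (\<lambda>_. 0) = 0 \<longrightarrow>
        (\<lambda>x. F (vec_of m fs x)) \<in> Dom \<and>
        (AE x in M. D (\<lambda>x. F (vec_of m fs x)) x =
            (\<Sum>j<m. dF j (vec_of m fs x) *\<^sub>R D (fs j) x)))"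

definition E01 :: "'a measure \<Rightarrow> (('a \<Rightarrow> real) \<Rightarrow> ('a \<Rightarrow> 'h::{real_inner,banach,second_countable_topology})) \<Rightarrow> ('a \<Rightarrow> real) \<Rightarrow> real" where
  "E01 M D f = (1/2) * integral\<^sup>L M (\<lambda>x. (norm (D f x))\<^sup>2) + integral\<^sup>L M (\<lambda>x. (f x)\<^sup>2)"

definition Dom_on :: "'a measure \<Rightarrow> ('a \<Rightarrow> real) set \<Rightarrow> 'a set \<Rightarrow> ('a \<Rightarrow> real) set" where
  "Dom_on M Dom A = {f\<in>Dom. AE x in M. x \<notin> A \<longrightarrow> f x = 0}"

definition measurable_nest ::
  "'a measure \<Rightarrow> ('a \<Rightarrow> real) set \<Rightarrow> (('a \<Rightarrow> real) \<Rightarrow> ('a \<Rightarrow> 'h::{real_inner,banach,second_countable_topology})) \<Rightarrow> (nat \<Rightarrow> 'a set) \<Rightarrow> bool" where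
  "measurable_nest M Dom D Es \<longleftrightarrow>
     incseq Es \<and> (\<forall>k. Es k \<in> sets M) \<and>
     (\<forall>k. \<exists>h\<in>Dom. AE x in M. x \<in> Es k \<longrightarrow> 1 \<le> h x) \<and>
     (\<forall>f\<in>Dom. \<forall>\<epsilon>>0. \<exists>k. \<exists>g\<in>Dom_on M Dom (Es k). E01 M D (\<lambda>x. f x - g x) < \<epsilon>)"

end

theory Submission
  imports Defs
begin

text \<open>Choose \<open>h\<^sub>k \<in> Dom\<close> with \<open>h\<^sub>k \<ge> 1\<close> on \<open>E\<^sub>k\<close> and, by density of the nest, functions
  \<open>U\<^sub>i \<in> Dom\<close> vanishing off \<open>E\<^bsub>m(i)\<^esub>\<close> such that every \<open>h\<^sub>k\<close> is an \<open>E\<^sup>0\<^sub>1\<close>-limit of some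
  of them. With a \<open>C\<^sup>1\<close> step \<open>\<psi>\<^sub>a\<close> that vanishes where \<open>a t \<le> 1\<close> and equals \<open>1\<close> where
  \<open>a t \<ge> 2\<close>, put \<open>level\<^sub>k = \<Sum>\<^bsub>i<k, m(i)\<le>k\<^esub> \<psi>\<^sub>8(U\<^sub>i)\<close>, \<open>Ehat\<^sub>k = {level\<^sub>k \<ge> 1} \<inter> E\<^sub>k\<close> and
  \<open>\<chi>\<^sub>k = \<psi>\<^sub>2(level\<^sub>k)\<close>. The derivation property puts \<open>\<chi>\<^sub>k\<close> into \<open>Dom\<close>, and \<open>\<chi>\<^sub>k\<close> vanishes
  off \<open>E\<^sub>k\<close> because every summand of \<open>level\<^sub>k\<close> does.

  For the density of the new nest, approximate \<open>f \<in> Dom\<close> by \<open>g\<close> vanishing off \<open>E\<^sub>n\<close>, replace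
  \<open>g\<close> by a bounded truncation \<open>T(g)\<close>, and multiply by \<open>\<psi>\<^sub>4(U\<^sub>i)\<close> with \<open>U\<^sub>i \<rightarrow> h\<^sub>n\<close>. The
  product vanishes off \<open>Ehat\<^sub>k\<close> for large \<open>k\<close>, and along an a.e. convergent subsequence it tends
  to \<open>T(g)\<close> in \<open>E\<^sup>0\<^sub>1\<close>: \<open>\<psi>\<^sub>4\<close> is flat and equal to \<open>1\<close> near \<open>h\<^sub>n \<ge> 1\<close> on \<open>E\<^sub>n\<close>, while off
  \<open>E\<^sub>n\<close> both \<open>g\<close> and, by locality of \<open>D\<close>, \<open>D g\<close> vanish.\<close>

section \<open>Smooth steps and approximations of the identity\<close>

lemma add_power2_pos: "0 < e \<Longrightarrow> 0 < e + (x::real)\<^sup>2"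
  using zero_le_power2[of x] by linarith

lemma square_sum_le: "(a + b)\<^sup>2 \<le> 2 * a\<^sup>2 + 2 * (b::real)\<^sup>2"
  using zero_le_power2[of "a - b"] by (simp add: power2_diff power2_sum)

lemma has_real_derivative_split:
  fixes f :: "real \<Rightarrow> real"
  assumes "(f has_real_derivative d) (at c within {..<c})"
    and "(f has_real_derivative d) (at c within {c<..})"
  shows "(f has_real_derivative d) (at c)"
  using assms unfolding has_field_derivative_iff by (simp add: filterlim_at_split)

definition smoothstep :: "real \<Rightarrow> real" where
  "smoothstep s = (if s \<le> 0 then 0 else if 1 \<le> s then 1 else 3 * s ^ 2 - 2 * s ^ 3)"

definition smoothstep' :: "real \<Rightarrow> real" where
  "smoothstep' s = max 0 (6 * s - 6 * s ^ 2)"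

lemma smoothstep'_eq: "smoothstep' s = (if 0 < s \<and> s < 1 then 6 * s - 6 * s ^ 2 else 0)"
proof -
  have "6 * s - 6 * s ^ 2 = 6 * (s * (1 - s))" by (simp add: algebra_simps power2_eq_square)
  moreover have "0 < s * (1 - s) \<longleftrightarrow> 0 < s \<and> s < 1"
    by (auto simp: zero_less_mult_iff)
  ultimately show ?thesis unfolding smoothstep'_def by auto
qed

lemma has_real_derivative_eq_near:
  assumes "open U" "t \<in> U" "\<And>y. y \<in> U \<Longrightarrow> y \<in> S \<Longrightarrow> f y = g y" "f t = g t"
    and "(g has_real_derivative d) (at t within S)"
  shows "(f has_real_derivative d) (at t within S)"
proof -
  have "eventually (\<lambda>y. f y = g y) (at t within S)"
    unfolding eventually_at_filter using eventually_nhds_in_open[OF assms(1,2)]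
    by eventually_elim (simp add: assms(3))
  with assms(4,5) show ?thesis
    by (subst has_field_derivative_cong_eventually) auto
qed

lemma smoothstep_has_real_derivative: "(smoothstep has_real_derivative smoothstep' s) (at s)"
proof -
  define p :: "real \<Rightarrow> real" where "p s = 3 * s ^ 2 - 2 * s ^ 3" for s
  have p: "(p has_real_derivative 6 * s - 6 * s ^ 2) (at s within S)" for s S
    unfolding p_def by (auto intro!: derivative_eq_intros simp: power2_eq_square)
  note near = has_real_derivative_eq_near[where f = smoothstep]
  consider "s < 0" | "s = 0" | "0 < s \<and> s < 1" | "s = 1" | "1 < s" by linarith
  then show ?thesis
  proof cases
    case 1
    then show ?thesis
      by (intro near[where U="{..<0}" and g="\<lambda>_. 0"]) (auto simp: smoothstep_def smoothstep'_eq)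
  next
    case 3
    then show ?thesis
      by (intro near[where U="{0<..<1}" and g=p] p[THEN DERIV_cong])
        (auto simp: smoothstep_def smoothstep'_eq p_def)
  next
    case 5
    then show ?thesis
      by (intro near[where U="{1<..}" and g="\<lambda>_. 1"]) (auto simp: smoothstep_def smoothstep'_eq)
  next
    case 2
    show ?thesis unfolding 2
    proof (rule has_real_derivative_split)
      show "(smoothstep has_real_derivative smoothstep' 0) (at 0 within {..<0})"
        by (intro near[where U="{..<1}" and g="\<lambda>_. 0"]) (auto simp: smoothstep_def smoothstep'_eq)
      show "(smoothstep has_real_derivative smoothstep' 0) (at 0 within {0<..})"
        by (intro near[where U="{..<1}" and g=p] p[THEN DERIV_cong])
          (auto simp: smoothstep_def smoothstep'_eq p_def)
    qed
  next
    case 4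
    show ?thesis unfolding 4
    proof (rule has_real_derivative_split)
      show "(smoothstep has_real_derivative smoothstep' 1) (at 1 within {..<1})"
        by (intro near[where U="{0<..}" and g=p] p[THEN DERIV_cong])
          (auto simp: smoothstep_def smoothstep'_eq p_def)
      show "(smoothstep has_real_derivative smoothstep' 1) (at 1 within {1<..})"
        by (intro near[where U="{0<..}" and g="\<lambda>_. 1"]) (auto simp: smoothstep_def smoothstep'_eq)
    qed
  qed
qed

lemma smoothstep_bounds: "0 \<le> smoothstep s" "smoothstep s \<le> 1"
proof -
  have "0 \<le> 3 * s ^ 2 - 2 * s ^ 3 \<and> 3 * s ^ 2 - 2 * s ^ 3 \<le> 1" if "0 < s" "s < 1"
  proof -
    have "3 * s ^ 2 - 2 * s ^ 3 = s ^ 2 * (3 - 2 * s)"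
      and "1 - (3 * s ^ 2 - 2 * s ^ 3) = (1 - s) ^ 2 * (1 + 2 * s)"
      by (simp_all add: algebra_simps power2_eq_square power3_eq_cube)
    moreover have "0 \<le> s ^ 2 * (3 - 2 * s)" "0 \<le> (1 - s) ^ 2 * (1 + 2 * s)"
      using that by simp_all
    ultimately show ?thesis by linarith
  qed
  then show "0 \<le> smoothstep s" "smoothstep s \<le> 1" by (auto simp: smoothstep_def)
qed

lemma smoothstep'_bound: "\<bar>smoothstep' s\<bar> \<le> 2"
proof -
  have "6 * s - 6 * s ^ 2 = 3/2 - 6 * (s - 1/2) ^ 2" by (simp add: algebra_simps power2_eq_square)
  moreover have "0 \<le> (s - 1/2) ^ 2" by simp
  ultimately have "6 * s - 6 * s ^ 2 \<le> 2" by linarith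
  then show ?thesis unfolding smoothstep'_def by auto
qed

lemma continuous_on_smoothstep': "continuous_on UNIV smoothstep'"
  unfolding smoothstep'_def by (intro continuous_intros)

definition cutoff :: "real \<Rightarrow> real \<Rightarrow> real" where
  "cutoff a t = smoothstep (a * t - 1)"

definition cutoff' :: "real \<Rightarrow> real \<Rightarrow> real" where
  "cutoff' a t = a * smoothstep' (a * t - 1)"

lemma cutoff_has_real_derivative: "(cutoff a has_real_derivative cutoff' a t) (at t)"
proof -
  have "((\<lambda>t. smoothstep (a * t - 1)) has_real_derivative smoothstep' (a * t - 1) * a) (at t)"
    by (rule DERIV_chain2[OF smoothstep_has_real_derivative]) (auto intro!: derivative_eq_intros)
  then show ?thesis unfolding cutoff_def cutoff'_def by (simp add: mult.commute)
qed

lemma continuous_on_cutoff: "continuous_on UNIV (cutoff a)"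
  by (rule DERIV_continuous_on[OF cutoff_has_real_derivative])

lemma continuous_on_cutoff': "continuous_on UNIV (cutoff' a)"
  unfolding cutoff'_def
  by (intro continuous_intros continuous_on_compose2[OF continuous_on_smoothstep']) auto

lemma cutoff_bounds: "0 \<le> cutoff a t" "cutoff a t \<le> 1"
  unfolding cutoff_def using smoothstep_bounds by auto

lemma cutoff'_bound: "0 \<le> a \<Longrightarrow> \<bar>cutoff' a t\<bar> \<le> 2 * a"
  unfolding cutoff'_def using smoothstep'_bound[of "a * t - 1"]
  by (simp add: abs_mult mult_left_mono mult.commute)

lemma cutoff_eq_0: "a * t \<le> 1 \<Longrightarrow> cutoff a t = 0"
  by (simp add: cutoff_def smoothstep_def)

lemma cutoff_eq_1: "2 \<le> a * t \<Longrightarrow> cutoff a t = 1"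
  by (simp add: cutoff_def smoothstep_def)

lemma cutoff'_eq_0: "2 \<le> a * t \<Longrightarrow> cutoff' a t = 0"
  by (simp add: cutoff'_def smoothstep'_eq)

text \<open>As \<open>e \<rightarrow> 0\<close> the derivative of \<open>flat_id e\<close> tends to the indicator of \<open>t \<noteq> 0\<close>; with the
  closedness of \<open>D\<close> this yields \<open>D f = 0\<close> a.e. on \<open>{f = 0}\<close>.\<close>

definition flat_id :: "real \<Rightarrow> real \<Rightarrow> real" where
  "flat_id e t = t ^ 3 / (e + t\<^sup>2)"

definition flat_id' :: "real \<Rightarrow> real \<Rightarrow> real" where
  "flat_id' e t = (t ^ 4 + 3 * e * t\<^sup>2) / (e + t\<^sup>2)\<^sup>2"

lemma flat_id_has_real_derivative:
  assumes "0 < e" shows "(flat_id e has_real_derivative flat_id' e t) (at t)"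
proof -
  have "e + t\<^sup>2 \<noteq> 0" using add_power2_pos[OF assms, of t] by simp
  then show ?thesis unfolding flat_id_def flat_id'_def
    by (auto intro!: derivative_eq_intros simp: divide_simps)
      (simp add: algebra_simps power2_eq_square power3_eq_cube power4_eq_xxxx)
qed

lemma flat_id'_bounds: assumes "0 < e" shows "0 \<le> flat_id' e t" "flat_id' e t \<le> 3"
proof -
  have "3 * (e + t\<^sup>2)\<^sup>2 - (t ^ 4 + 3 * e * t\<^sup>2) = 2 * t ^ 4 + 3 * e * t\<^sup>2 + 3 * e\<^sup>2"
    by (simp add: power2_eq_square power4_eq_xxxx algebra_simps)
  moreover have "0 \<le> 2 * t ^ 4 + 3 * e * t\<^sup>2 + 3 * e\<^sup>2"
    using assms by (intro add_nonneg_nonneg mult_nonneg_nonneg) auto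
  ultimately have "t ^ 4 + 3 * e * t\<^sup>2 \<le> 3 * (e + t\<^sup>2)\<^sup>2" by linarith
  moreover have "0 < (e + t\<^sup>2)\<^sup>2" using add_power2_pos[OF assms, of t] by simp
  ultimately show "0 \<le> flat_id' e t" "flat_id' e t \<le> 3"
    using assms by (auto simp: flat_id'_def divide_le_eq)
qed

lemma continuous_on_flat_id': assumes "0 < e" shows "continuous_on UNIV (flat_id' e)"
proof -
  have "e + t\<^sup>2 \<noteq> 0" for t using add_power2_pos[OF assms, of t] by simp
  then show ?thesis unfolding flat_id'_def by (intro continuous_intros) simp
qed

lemma flat_id_0: "flat_id e 0 = 0"
  by (simp add: flat_id_def)

lemma flat_id_dist: assumes "0 < e" shows "\<bar>flat_id e t - t\<bar> \<le> \<bar>t\<bar>"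
proof -
  have p: "0 < e + t\<^sup>2" using add_power2_pos[OF assms, of t] by simp
  then have "flat_id e t - t = - (t * (e / (e + t\<^sup>2)))"
    by (simp add: flat_id_def divide_simps power2_eq_square power3_eq_cube algebra_simps)
  then have "\<bar>flat_id e t - t\<bar> = \<bar>t\<bar> * (e / (e + t\<^sup>2))"
    using p assms by (simp add: abs_mult)
  also have "\<dots> \<le> \<bar>t\<bar>" using p assms by (intro mult_left_le) auto
  finally show ?thesis .
qed

lemma flat_id_tendsto: "e \<longlonglongrightarrow> 0 \<Longrightarrow> (\<lambda>n. flat_id (e n) t) \<longlonglongrightarrow> t"
  unfolding flat_id_def
  by (cases "t = 0") (auto intro!: tendsto_eq_intros simp: power2_eq_square power3_eq_cube)

lemma flat_id'_tendsto: "e \<longlonglongrightarrow> 0 \<Longrightarrow> (\<lambda>n. flat_id' (e n) t) \<longlonglongrightarrow> (if t = 0 then 0 else 1)"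
  unfolding flat_id'_def
  by (cases "t = 0") (auto intro!: tendsto_eq_intros simp: power2_eq_square power4_eq_xxxx)

text \<open>\<open>bounded_id c\<close> truncates elements of \<open>Dom\<close>, so that their products with cutoffs fall under
  the two-variable chain rule, which needs bounded factors.\<close>

definition bounded_id :: "real \<Rightarrow> real \<Rightarrow> real" where
  "bounded_id c t = t / (1 + (c * t)\<^sup>2)"

definition bounded_id' :: "real \<Rightarrow> real \<Rightarrow> real" where
  "bounded_id' c t = (1 - (c * t)\<^sup>2) / (1 + (c * t)\<^sup>2)\<^sup>2"

lemma bounded_id_has_real_derivative: "(bounded_id c has_real_derivative bounded_id' c t) (at t)"
proof -
  have "1 + (c * t)\<^sup>2 \<noteq> 0" using add_power2_pos[of 1 "c * t"] by simp
  then show ?thesis unfolding bounded_id_def bounded_id'_def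
    by (auto intro!: derivative_eq_intros simp: field_simps power2_eq_square)
qed

lemma continuous_on_bounded_id: "continuous_on UNIV (bounded_id c)"
  by (rule DERIV_continuous_on[OF bounded_id_has_real_derivative])

lemma continuous_on_bounded_id': "continuous_on UNIV (bounded_id' c)"
proof -
  have "1 + (c * t)\<^sup>2 \<noteq> 0" for t using add_power2_pos[of 1 "c * t"] by simp
  then show ?thesis unfolding bounded_id'_def by (intro continuous_intros) simp
qed

lemma bounded_id'_bound: "\<bar>bounded_id' c t\<bar> \<le> 1"
proof -
  define s where "s = (c * t)\<^sup>2"
  have s: "0 \<le> s" unfolding s_def by simp
  then have "\<bar>1 - s\<bar> \<le> 1 + s" "1 + s \<le> (1 + s)\<^sup>2" by (simp_all add: power2_eq_square)
  then have "\<bar>1 - s\<bar> \<le> (1 + s)\<^sup>2" by linarith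
  then show ?thesis using s unfolding bounded_id'_def s_def[symmetric]
    by (simp add: abs_divide divide_le_eq_1)
qed

lemma bounded_id_0: "bounded_id c 0 = 0"
  by (simp add: bounded_id_def)

lemma bounded_id_bound: assumes "0 < c" shows "\<bar>bounded_id c t\<bar> \<le> 1 / c"
proof -
  have "0 \<le> (\<bar>c * t\<bar> - 1/2)\<^sup>2" by simp
  then have "\<bar>c * t\<bar> \<le> 1 + (c * t)\<^sup>2" by (simp add: power2_diff power_one_over)
  then have "\<bar>t\<bar> * c \<le> 1 + (c * t)\<^sup>2" using assms by (simp add: abs_mult mult.commute)
  moreover have "0 < 1 + (c * t)\<^sup>2" using add_power2_pos[of 1 "c * t"] by simp
  ultimately show ?thesis using assms
    by (simp add: bounded_id_def abs_divide divide_le_eq le_divide_eq)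
qed

lemma bounded_id_abs_le: "\<bar>bounded_id c t\<bar> \<le> \<bar>t\<bar>"
proof -
  have d: "1 \<le> 1 + (c * t)\<^sup>2" by simp
  have "\<bar>t\<bar> \<le> \<bar>t\<bar> * (1 + (c * t)\<^sup>2)" using mult_left_mono[OF d, of "\<bar>t\<bar>"] by simp
  moreover have "0 < 1 + (c * t)\<^sup>2" using d by linarith
  ultimately show ?thesis by (simp add: bounded_id_def abs_divide pos_divide_le_eq)
qed

lemma bounded_id_dist: "\<bar>t - bounded_id c t\<bar> \<le> \<bar>t\<bar>"
proof -
  have p: "0 < 1 + (c * t)\<^sup>2" using add_power2_pos[of 1 "c * t"] by simp
  then have "t - bounded_id c t = t * ((c * t)\<^sup>2 / (1 + (c * t)\<^sup>2))"
    by (simp add: bounded_id_def divide_simps algebra_simps)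
  then have "\<bar>t - bounded_id c t\<bar> = \<bar>t\<bar> * ((c * t)\<^sup>2 / (1 + (c * t)\<^sup>2))"
    using p by (simp add: abs_mult)
  also have "\<dots> \<le> \<bar>t\<bar>" using p by (intro mult_left_le) auto
  finally show ?thesis .
qed

lemma bounded_id_tendsto: "c \<longlonglongrightarrow> 0 \<Longrightarrow> (\<lambda>n. bounded_id (c n) t) \<longlonglongrightarrow> t"
  unfolding bounded_id_def by (auto intro!: tendsto_eq_intros)

lemma bounded_id'_tendsto: "c \<longlonglongrightarrow> 0 \<Longrightarrow> (\<lambda>n. bounded_id' (c n) t) \<longlonglongrightarrow> 1"
  unfolding bounded_id'_def by (auto intro!: tendsto_eq_intros)

lemma bounded_id_mult_cutoff'_bound:
  assumes "0 < c" "0 \<le> a" shows "\<bar>bounded_id c s * cutoff' a t\<bar> \<le> 2 * a / c"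
proof -
  have "\<bar>bounded_id c s * cutoff' a t\<bar> \<le> 1 / c * (2 * a)"
    unfolding abs_mult using bounded_id_bound[OF assms(1)] cutoff'_bound[OF assms(2)] assms
    by (intro mult_mono) auto
  then show ?thesis by simp
qed

lemma cutoff_borel [measurable]: "cutoff a \<in> borel_measurable borel"
  and cutoff'_borel [measurable]: "cutoff' a \<in> borel_measurable borel"
  and bounded_id_borel [measurable]: "bounded_id c \<in> borel_measurable borel"
  and bounded_id'_borel [measurable]: "bounded_id' c \<in> borel_measurable borel"
  by (simp_all add: borel_measurable_continuous_onI continuous_on_cutoff continuous_on_cutoff'
      continuous_on_bounded_id continuous_on_bounded_id')

lemma integral_tendsto_0_dominated:
  fixes f :: "nat \<Rightarrow> 'a \<Rightarrow> real"
  assumes "\<And>n. f n \<in> borel_measurable M" and "integrable M w"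
    and "\<And>n. AE x in M. \<bar>f n x\<bar> \<le> w x" and "AE x in M. (\<lambda>n. f n x) \<longlonglongrightarrow> 0"
  shows "(\<lambda>n. integral\<^sup>L M (f n)) \<longlonglongrightarrow> 0"
  using integral_dominated_convergence[OF borel_measurable_const assms(1,2,4)] assms(3) by simp

lemma integral_norm_sq_tendsto_0_sum:
  fixes F A B :: "nat \<Rightarrow> 'a \<Rightarrow> 'b::real_normed_vector"
  assumes "\<And>n. AE x in M. norm (F n x) \<le> norm (A n x) + norm (B n x)"
    and "\<And>n. integrable M (\<lambda>x. (norm (F n x))\<^sup>2)"
    and "\<And>n. integrable M (\<lambda>x. (norm (A n x))\<^sup>2)" "\<And>n. integrable M (\<lambda>x. (norm (B n x))\<^sup>2)"
    and "(\<lambda>n. \<integral>x. (norm (A n x))\<^sup>2 \<partial>M) \<longlonglongrightarrow> 0" "(\<lambda>n. \<integral>x. (norm (B n x))\<^sup>2 \<partial>M) \<longlonglongrightarrow> 0"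
  shows "(\<lambda>n. \<integral>x. (norm (F n x))\<^sup>2 \<partial>M) \<longlonglongrightarrow> 0"
proof (rule tendsto_sandwich[of "\<lambda>_. 0" _ _
      "\<lambda>n. 2 * (\<integral>x. (norm (A n x))\<^sup>2 \<partial>M) + 2 * (\<integral>x. (norm (B n x))\<^sup>2 \<partial>M)"])
  have "(\<integral>x. (norm (F n x))\<^sup>2 \<partial>M) \<le> (\<integral>x. 2 * (norm (A n x))\<^sup>2 + 2 * (norm (B n x))\<^sup>2 \<partial>M)" for n
  proof (rule integral_mono_AE)
    show "AE x in M. (norm (F n x))\<^sup>2 \<le> 2 * (norm (A n x))\<^sup>2 + 2 * (norm (B n x))\<^sup>2"
      using assms(1)[of n]
    proof eventually_elim
      case (elim x)
      have "(norm (F n x))\<^sup>2 \<le> (norm (A n x) + norm (B n x))\<^sup>2"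
        using elim by (intro power_mono) auto
      also have "\<dots> \<le> 2 * (norm (A n x))\<^sup>2 + 2 * (norm (B n x))\<^sup>2"
        by (rule square_sum_le)
      finally show ?case .
    qed
  qed (use assms(2-4) in auto)
  then show "\<forall>\<^sub>F n in sequentially. (\<integral>x. (norm (F n x))\<^sup>2 \<partial>M) \<le>
      2 * (\<integral>x. (norm (A n x))\<^sup>2 \<partial>M) + 2 * (\<integral>x. (norm (B n x))\<^sup>2 \<partial>M)"
    using assms(3,4) by simp
  show "(\<lambda>n. 2 * (\<integral>x. (norm (A n x))\<^sup>2 \<partial>M) + 2 * (\<integral>x. (norm (B n x))\<^sup>2 \<partial>M)) \<longlonglongrightarrow> 0"
    using assms(5,6) by (auto intro!: tendsto_eq_intros)
qed simp_all

section \<open>The domain of a closed derivation\<close>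

locale closed_derivation =
  fixes M :: "'a measure" and Dom :: "('a \<Rightarrow> real) set"
    and D :: "('a \<Rightarrow> real) \<Rightarrow> ('a \<Rightarrow> 'h::{real_inner,banach,second_countable_topology})"
  assumes standing: "standing M Dom D"
begin

lemma Dom_borel_measurable [measurable_dest]: "f \<in> Dom \<Longrightarrow> f \<in> borel_measurable M"
  and D_borel_measurable [measurable_dest]: "f \<in> Dom \<Longrightarrow> D f \<in> borel_measurable M"
  and Dom_square_integrable: "f \<in> Dom \<Longrightarrow> integrable M (\<lambda>x. (f x)\<^sup>2)"
  and D_square_integrable: "f \<in> Dom \<Longrightarrow> integrable M (\<lambda>x. (norm (D f x))\<^sup>2)"
  using standing unfolding standing_def sq_int_def vsq_int_def by blast+

lemma Dom_zero: "(\<lambda>x. 0) \<in> Dom"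
  using standing unfolding standing_def by blast

lemma Dom_add: "f \<in> Dom \<Longrightarrow> g \<in> Dom \<Longrightarrow>
    (\<lambda>x. f x + g x) \<in> Dom \<and> (AE x in M. D (\<lambda>x. f x + g x) x = D f x + D g x)"
  using standing unfolding standing_def by blast

lemma Dom_cmult: "f \<in> Dom \<Longrightarrow> (\<lambda>x. c * f x) \<in> Dom \<and> (AE x in M. D (\<lambda>x. c * f x) x = c *\<^sub>R D f x)"
  using standing unfolding standing_def by blast

lemma Dom_diff:
  assumes "f \<in> Dom" and "g \<in> Dom"
  shows "(\<lambda>x. f x - g x) \<in> Dom \<and> (AE x in M. D (\<lambda>x. f x - g x) x = D f x - D g x)"
proof -
  have neg: "(\<lambda>x. -1 * g x) \<in> Dom" "AE x in M. D (\<lambda>x. -1 * g x) x = - D g x"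
    using Dom_cmult[OF assms(2), of "-1"] by auto
  have e: "(\<lambda>x. f x + -1 * g x) = (\<lambda>x. f x - g x)" by simp
  have "(\<lambda>x. f x - g x) \<in> Dom" "AE x in M. D (\<lambda>x. f x - g x) x = D f x + D (\<lambda>x. -1 * g x) x"
    using Dom_add[OF assms(1) neg(1)] unfolding e by auto
  moreover from this(2) neg(2) have "AE x in M. D (\<lambda>x. f x - g x) x = D f x - D g x"
    by eventually_elim simp
  ultimately show ?thesis by simp
qed

lemma Dom_sum: "finite I \<Longrightarrow> (\<And>i. i \<in> I \<Longrightarrow> f i \<in> Dom) \<Longrightarrow> (\<lambda>x. \<Sum>i\<in>I. f i x) \<in> Dom"
  by (induction I rule: finite_induct) (simp_all add: Dom_zero Dom_add)

lemma derivation: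
  assumes "\<And>j. j < m \<Longrightarrow> f j \<in> Dom" and "C1_bdd m F dF" and "F (\<lambda>_. 0) = 0"
  shows "(\<lambda>x. F (vec_of m f x)) \<in> Dom \<and>
    (AE x in M. D (\<lambda>x. F (vec_of m f x)) x = (\<Sum>j<m. dF j (vec_of m f x) *\<^sub>R D (f j) x))"
proof -
  have "\<forall>m f F dF. (\<forall>j<m. f j \<in> Dom) \<and> C1_bdd m F dF \<and> F (\<lambda>_. 0) = 0 \<longrightarrow>
    (\<lambda>x. F (vec_of m f x)) \<in> Dom \<and>
    (AE x in M. D (\<lambda>x. F (vec_of m f x)) x = (\<Sum>j<m. dF j (vec_of m f x) *\<^sub>R D (f j) x))"
    using standing unfolding standing_def by (elim conjE) assumption
  with assms show ?thesis by blast
qed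

lemma closed_operator:
  assumes "\<And>n. f n \<in> Dom" and "sq_int M g" and "vsq_int M G"
    and "(\<lambda>n. L2dist2 M (f n) g) \<longlonglongrightarrow> 0" and "(\<lambda>n. L2Hdist2 M (D (f n)) G) \<longlonglongrightarrow> 0"
  shows "g \<in> Dom \<and> (AE x in M. D g x = G x)"
proof -
  have "\<forall>f g G. (\<forall>n. f n \<in> Dom) \<and> sq_int M g \<and> vsq_int M G \<and>
      (\<lambda>n. L2dist2 M (f n) g) \<longlonglongrightarrow> 0 \<and> (\<lambda>n. L2Hdist2 M (D (f n)) G) \<longlonglongrightarrow> 0 \<longrightarrow>
      g \<in> Dom \<and> (AE x in M. D g x = G x)"
    using standing unfolding standing_def by (elim conjE) assumption
  with assms show ?thesis by blast
qed


lemma chain_rule: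
  assumes f: "f \<in> Dom"
    and \<phi>: "\<And>t. (\<phi> has_real_derivative \<phi>' t) (at t)" "continuous_on UNIV \<phi>'" "\<And>t. \<bar>\<phi>' t\<bar> \<le> B"
    and "\<phi> 0 = 0"
  shows "(\<lambda>x. \<phi> (f x)) \<in> Dom \<and> (AE x in M. D (\<lambda>x. \<phi> (f x)) x = \<phi>' (f x) *\<^sub>R D f x)"
proof -
  define F where "F v = \<phi> (v 0)" for v :: "nat \<Rightarrow> real"
  define dF where "dF j v = \<phi>' (v 0)" for j :: nat and v :: "nat \<Rightarrow> real"
  have "C1_bdd 1 F dF"
    unfolding C1_bdd_def
  proof (intro conjI ballI allI impI)
    fix x :: "nat \<Rightarrow> real" and j :: nat assume "j < 1"
    then show "((\<lambda>t. F (x(j := t))) has_real_derivative dF j x) (at (x j))"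
      unfolding F_def dF_def using \<phi>(1) by simp
    have "continuous_on UNIV (\<lambda>v::nat\<Rightarrow>real. \<phi>' (v 0))"
      by (rule continuous_on_compose2[OF \<phi>(2) continuous_on_product_coordinates]) auto
    then show "continuous_on (Rm 1) (dF j)"
      unfolding dF_def by (rule continuous_on_subset) auto
    show "\<exists>B. \<forall>x\<in>Rm 1. \<bar>dF j x\<bar> \<le> B" unfolding dF_def using \<phi>(3) by blast
  qed
  moreover have "F (\<lambda>_. 0) = 0" using assms(5) by (simp add: F_def)
  ultimately show ?thesis
    using derivation[of 1 "\<lambda>_. f" F dF] f by (simp add: F_def dF_def vec_of_def)
qed

lemma chain_rule_product:
  assumes f: "f \<in> Dom" and g: "g \<in> Dom"
    and \<phi>: "\<And>t. (\<phi> has_real_derivative \<phi>' t) (at t)" "continuous_on UNIV \<phi>'"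
    and \<psi>: "\<And>t. (\<psi> has_real_derivative \<psi>' t) (at t)" "continuous_on UNIV \<psi>'"
    and bounded: "\<And>t. \<bar>\<phi> t\<bar> \<le> B" "\<And>t. \<bar>\<phi>' t\<bar> \<le> B" "\<And>t. \<bar>\<psi> t\<bar> \<le> B" "\<And>t. \<bar>\<psi>' t\<bar> \<le> B"
    and "\<phi> 0 = 0"
  shows "(\<lambda>x. \<phi> (f x) * \<psi> (g x)) \<in> Dom \<and>
    (AE x in M. D (\<lambda>x. \<phi> (f x) * \<psi> (g x)) x =
       (\<phi>' (f x) * \<psi> (g x)) *\<^sub>R D f x + (\<phi> (f x) * \<psi>' (g x)) *\<^sub>R D g x)"
proof -
  define fg where "fg j = (if j = 0 then f else g)" for j :: nat
  define F where "F v = \<phi> (v 0) * \<psi> (v 1)" for v :: "nat \<Rightarrow> real"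
  define dF where "dF j v = (if j = 0 then \<phi>' (v 0) * \<psi> (v 1) else \<phi> (v 0) * \<psi>' (v 1))"
    for j :: nat and v :: "nat \<Rightarrow> real"
  have coord: "continuous_on UNIV (\<lambda>v::nat\<Rightarrow>real. h (v i))" if "continuous_on UNIV h" for h i
    by (rule continuous_on_compose2[OF that continuous_on_product_coordinates]) auto
  have "continuous_on UNIV \<phi>" "continuous_on UNIV \<psi>"
    using \<phi>(1) \<psi>(1) by (auto intro: DERIV_continuous_on)
  then have cont: "continuous_on UNIV (dF j)" for j
    unfolding dF_def using \<phi>(2) \<psi>(2) by (cases "j = 0") (auto intro!: continuous_on_mult coord)
  have "0 \<le> B" using bounded(1)[of 0] by linarith
  then have "\<bar>dF j x\<bar> \<le> B * B" for j x
    unfolding dF_def using bounded by (auto simp: abs_mult intro!: mult_mono)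
  moreover have "((\<lambda>t. F (x(j := t))) has_real_derivative dF j x) (at (x j))" if "j < 2" for j x
  proof -
    from that consider "j = 0" | "j = 1" by linarith
    then show ?thesis
      by cases (auto simp: F_def dF_def intro: DERIV_cmult_right[OF \<phi>(1)] DERIV_cmult[OF \<psi>(1)])
  qed
  ultimately have "C1_bdd 2 F dF"
    unfolding C1_bdd_def using cont by (blast intro: continuous_on_subset)
  moreover have "F (\<lambda>_. 0) = 0" using assms(11) by (simp add: F_def)
  moreover have "\<And>j. j < 2 \<Longrightarrow> fg j \<in> Dom" using f g by (simp add: fg_def)
  ultimately show ?thesis
    using derivation[of 2 fg F dF] by (simp add: F_def dF_def vec_of_def fg_def eval_nat_numeral)
qed

lemma cutoff_in_Dom: "u \<in> Dom \<Longrightarrow> 0 \<le> a \<Longrightarrow> (\<lambda>x. cutoff a (u x)) \<in> Dom"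
  using chain_rule[OF _ cutoff_has_real_derivative continuous_on_cutoff' cutoff'_bound cutoff_eq_0]
  by simp

lemma E01_nonneg: "0 \<le> E01 M D f"
  unfolding E01_def by (intro add_nonneg_nonneg mult_nonneg_nonneg integral_nonneg_AE) auto

lemma E01_diff:
  assumes "f \<in> Dom" and "g \<in> Dom"
  shows "E01 M D (\<lambda>x. f x - g x) =
    1/2 * (\<integral>x. (norm (D f x - D g x))\<^sup>2 \<partial>M) + (\<integral>x. (f x - g x)\<^sup>2 \<partial>M)"
proof -
  have fg: "(\<lambda>x. f x - g x) \<in> Dom" and ae: "AE x in M. D (\<lambda>x. f x - g x) x = D f x - D g x"
    using Dom_diff[OF assms] by auto
  have [measurable]: "D (\<lambda>x. f x - g x) \<in> borel_measurable M"
    "D f \<in> borel_measurable M" "D g \<in> borel_measurable M"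
    using fg assms by (auto intro: D_borel_measurable)
  have "(\<integral>x. (norm (D (\<lambda>x. f x - g x) x))\<^sup>2 \<partial>M) = (\<integral>x. (norm (D f x - D g x))\<^sup>2 \<partial>M)"
    by (rule integral_cong_AE) (use ae in \<open>auto elim: AE_mp\<close>)
  then show ?thesis unfolding E01_def by simp
qed

lemma E01_tendsto_0_iff:
  "(\<lambda>n. E01 M D (f n)) \<longlonglongrightarrow> 0 \<longleftrightarrow>
    (\<lambda>n. \<integral>x. (norm (D (f n) x))\<^sup>2 \<partial>M) \<longlonglongrightarrow> 0 \<and> (\<lambda>n. \<integral>x. (f n x)\<^sup>2 \<partial>M) \<longlonglongrightarrow> 0"
    (is "?E \<longlonglongrightarrow> 0 \<longleftrightarrow> ?I \<longlonglongrightarrow> 0 \<and> ?J \<longlonglongrightarrow> 0")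
proof
  assume E: "?E \<longlonglongrightarrow> 0"
  have I: "0 \<le> ?I n" and J: "0 \<le> ?J n" for n
    by (simp_all add: integral_nonneg_AE)
  have E2: "(\<lambda>n. 2 * ?E n) \<longlonglongrightarrow> 0" using tendsto_mult_right_zero[OF E] by simp
  show "?I \<longlonglongrightarrow> 0 \<and> ?J \<longlonglongrightarrow> 0"
  proof
    show "?I \<longlonglongrightarrow> 0"
      by (rule tendsto_sandwich[OF _ _ tendsto_const E2]) (use I J in \<open>simp_all add: E01_def\<close>)
    show "?J \<longlonglongrightarrow> 0"
      by (rule tendsto_sandwich[OF _ _ tendsto_const E]) (use I J in \<open>simp_all add: E01_def\<close>)
  qed
next
  assume "?I \<longlonglongrightarrow> 0 \<and> ?J \<longlonglongrightarrow> 0"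
  then have "(\<lambda>n. 1/2 * ?I n + ?J n) \<longlonglongrightarrow> 1/2 * 0 + 0" by (intro tendsto_intros) auto
  then show "?E \<longlonglongrightarrow> 0" by (simp add: E01_def)
qed

lemma E01_add:
  assumes "f \<in> Dom" and "g \<in> Dom"
  shows "E01 M D (\<lambda>x. f x + g x) \<le> 2 * E01 M D f + 2 * E01 M D g"
proof -
  have "(\<lambda>x. f x + g x) \<in> Dom" and ae: "AE x in M. D (\<lambda>x. f x + g x) x = D f x + D g x"
    using Dom_add[OF assms] by auto
  have "(\<integral>x. (norm (D (\<lambda>x. f x + g x) x))\<^sup>2 \<partial>M) \<le>
      (\<integral>x. 2 * (norm (D f x))\<^sup>2 + 2 * (norm (D g x))\<^sup>2 \<partial>M)"
  proof (rule integral_mono_AE)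
    show "AE x in M. (norm (D (\<lambda>x. f x + g x) x))\<^sup>2 \<le> 2 * (norm (D f x))\<^sup>2 + 2 * (norm (D g x))\<^sup>2"
      using ae
    proof eventually_elim
      case (elim x)
      have "(norm (D f x + D g x))\<^sup>2 \<le> (norm (D f x) + norm (D g x))\<^sup>2"
        by (intro power_mono norm_triangle_ineq) simp
      then show ?case
        unfolding elim using square_sum_le[of "norm (D f x)" "norm (D g x)"] by (rule order_trans)
    qed
  qed (use assms \<open>(\<lambda>x. f x + g x) \<in> Dom\<close> in
      \<open>auto intro!: D_square_integrable Bochner_Integration.integrable_add integrable_mult_right\<close>)
  moreover have "(\<integral>x. (f x + g x)\<^sup>2 \<partial>M) \<le> (\<integral>x. 2 * (f x)\<^sup>2 + 2 * (g x)\<^sup>2 \<partial>M)"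
    using assms \<open>(\<lambda>x. f x + g x) \<in> Dom\<close>
    by (intro integral_mono square_sum_le)
      (auto intro!: Dom_square_integrable Bochner_Integration.integrable_add integrable_mult_right)
  ultimately show ?thesis
    using assms by (simp add: E01_def D_square_integrable Dom_square_integrable)
qed

lemma E01_triangle:
  assumes "f \<in> Dom" and "g \<in> Dom" and "h \<in> Dom"
  shows "E01 M D (\<lambda>x. f x - h x) \<le> 2 * E01 M D (\<lambda>x. f x - g x) + 2 * E01 M D (\<lambda>x. g x - h x)"
  using E01_add[of "\<lambda>x. f x - g x" "\<lambda>x. g x - h x"] Dom_diff assms by simp


lemma D_diff_square_integrable:
  assumes "f \<in> Dom" "g \<in> Dom"
  shows "integrable M (\<lambda>x. (norm (D f x - D g x))\<^sup>2)"
proof -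
  have fg: "(\<lambda>x. f x - g x) \<in> Dom" and ae: "AE x in M. D (\<lambda>x. f x - g x) x = D f x - D g x"
    using Dom_diff[OF assms] by auto
  have [measurable]: "D f \<in> borel_measurable M" "D g \<in> borel_measurable M"
    using assms by (auto intro: D_borel_measurable)
  show ?thesis
  proof (rule integrable_cong_AE_imp[OF D_square_integrable[OF fg]])
    show "AE x in M. (norm (D (\<lambda>x. f x - g x) x))\<^sup>2 = (norm (D f x - D g x))\<^sup>2"
      using ae by eventually_elim simp
  qed measurable
qed

lemma Dom_comp_L2_tendsto:
  assumes f: "f \<in> Dom" and \<phi>: "\<And>n. \<phi> n \<in> borel_measurable borel"
    "\<And>n t. \<bar>\<phi> n t - t\<bar> \<le> \<bar>t\<bar>" "\<And>t. (\<lambda>n. \<phi> n t) \<longlonglongrightarrow> t"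
  shows "(\<lambda>n. \<integral>x. (\<phi> n (f x) - f x)\<^sup>2 \<partial>M) \<longlonglongrightarrow> 0"
proof (rule integral_tendsto_0_dominated)
  have [measurable]: "\<phi> n \<in> borel_measurable borel" for n by (rule \<phi>(1))
  show "(\<lambda>x. (\<phi> n (f x) - f x)\<^sup>2) \<in> borel_measurable M" for n using f by measurable
  show "integrable M (\<lambda>x. (f x)\<^sup>2)" by (rule Dom_square_integrable[OF f])
  show "AE x in M. \<bar>(\<phi> n (f x) - f x)\<^sup>2\<bar> \<le> (f x)\<^sup>2" for n
    using \<phi>(2) by (simp add: abs_le_square_iff)
  have "(\<lambda>n. (\<phi> n (f x) - f x)\<^sup>2) \<longlonglongrightarrow> (f x - f x)\<^sup>2" for x
    by (intro tendsto_intros \<phi>(3))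
  then show "AE x in M. (\<lambda>n. (\<phi> n (f x) - f x)\<^sup>2) \<longlonglongrightarrow> 0" by simp
qed

lemma D_scaleR_L2_tendsto:
  assumes f: "f \<in> Dom"
    and a: "\<And>n. a n \<in> borel_measurable borel" "\<And>n t. \<bar>a n t\<bar> \<le> K" "\<And>t. (\<lambda>n. a n t) \<longlonglongrightarrow> b t"
    and b: "b \<in> borel_measurable borel" "\<And>t. \<bar>b t\<bar> \<le> K"
  shows "(\<lambda>n. \<integral>x. (norm (a n (f x) *\<^sub>R D f x - b (f x) *\<^sub>R D f x))\<^sup>2 \<partial>M) \<longlonglongrightarrow> 0"
proof (rule integral_tendsto_0_dominated)
  have [measurable]: "a n \<in> borel_measurable borel" "b \<in> borel_measurable borel" for n
    by (fact a(1) b(1))+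
  show "(\<lambda>x. (norm (a n (f x) *\<^sub>R D f x - b (f x) *\<^sub>R D f x))\<^sup>2) \<in> borel_measurable M" for n
    using f by measurable
  show "integrable M (\<lambda>x. (2 * K)\<^sup>2 * (norm (D f x))\<^sup>2)" using D_square_integrable[OF f] by simp
  show "AE x in M. \<bar>(norm (a n (f x) *\<^sub>R D f x - b (f x) *\<^sub>R D f x))\<^sup>2\<bar> \<le> (2 * K)\<^sup>2 * (norm (D f x))\<^sup>2"
    for n
  proof (rule AE_I2)
    fix x
    have "\<bar>a n (f x) - b (f x)\<bar> \<le> 2 * K"
      using abs_triangle_ineq4[of "a n (f x)" "b (f x)"] a(2)[of n "f x"] b(2)[of "f x"] by linarith
    then have "norm (a n (f x) *\<^sub>R D f x - b (f x) *\<^sub>R D f x) \<le> 2 * K * norm (D f x)"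
      by (simp add: scaleR_diff_left[symmetric] mult_right_mono)
    from power_mono[OF this norm_ge_zero, of 2]
    show "\<bar>(norm (a n (f x) *\<^sub>R D f x - b (f x) *\<^sub>R D f x))\<^sup>2\<bar> \<le> (2 * K)\<^sup>2 * (norm (D f x))\<^sup>2"
      by (simp add: power_mult_distrib)
  qed
  have "(\<lambda>n. (norm (a n (f x) *\<^sub>R D f x - b (f x) *\<^sub>R D f x))\<^sup>2) \<longlonglongrightarrow>
      (norm (b (f x) *\<^sub>R D f x - b (f x) *\<^sub>R D f x))\<^sup>2" for x
    by (intro tendsto_intros a(3))
  then show "AE x in M. (\<lambda>n. (norm (a n (f x) *\<^sub>R D f x - b (f x) *\<^sub>R D f x))\<^sup>2) \<longlonglongrightarrow> 0" by simp
qed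

lemma D_eq_0_where_zero:
  assumes f: "f \<in> Dom"
  shows "AE x in M. f x = 0 \<longrightarrow> D f x = 0"
proof -
  define e :: "nat \<Rightarrow> real" where "e n = inverse (real (Suc n))" for n
  have e: "0 < e n" for n by (simp add: e_def)
  have e_0: "e \<longlonglongrightarrow> 0" unfolding e_def by (rule LIMSEQ_inverse_real_of_nat)
  define b :: "real \<Rightarrow> real" where "b t = (if t = 0 then 0 else 1)" for t
  define G where "G x = b (f x) *\<^sub>R D f x" for x
  have [measurable]: "b \<in> borel_measurable borel" unfolding b_def[abs_def] by measurable
  have [measurable]: "flat_id (e n) \<in> borel_measurable borel" "flat_id' (e n) \<in> borel_measurable borel" for n
    using DERIV_continuous_on[OF flat_id_has_real_derivative[OF e]] continuous_on_flat_id'[OF e]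
    by (auto intro: borel_measurable_continuous_onI)
  have flat: "(\<lambda>x. flat_id (e n) (f x)) \<in> Dom \<and>
      (AE x in M. D (\<lambda>x. flat_id (e n) (f x)) x = flat_id' (e n) (f x) *\<^sub>R D f x)" for n
    using chain_rule[OF f flat_id_has_real_derivative[OF e] continuous_on_flat_id'[OF e] _ flat_id_0]
      flat_id'_bounds[OF e] by (metis abs_of_nonneg)
  have [measurable]: "f \<in> borel_measurable M" "D f \<in> borel_measurable M"
    "D (\<lambda>x. flat_id (e n) (f x)) \<in> borel_measurable M" for n
    using f flat by (blast intro: Dom_borel_measurable D_borel_measurable)+
  then have [measurable]: "G \<in> borel_measurable M" unfolding G_def by measurable
  have "(\<lambda>n. L2dist2 M (\<lambda>x. flat_id (e n) (f x)) f) \<longlonglongrightarrow> 0"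
    unfolding L2dist2_def
    by (rule Dom_comp_L2_tendsto[OF f]) (simp_all add: flat_id_dist[OF e] flat_id_tendsto[OF e_0])
  moreover have "(\<lambda>n. L2Hdist2 M (D (\<lambda>x. flat_id (e n) (f x))) G) \<longlonglongrightarrow> 0"
  proof -
    have "L2Hdist2 M (D (\<lambda>x. flat_id (e n) (f x))) G =
        (\<integral>x. (norm (flat_id' (e n) (f x) *\<^sub>R D f x - b (f x) *\<^sub>R D f x))\<^sup>2 \<partial>M)" for n
      unfolding L2Hdist2_def G_def
    proof (rule integral_cong_AE)
      show "AE x in M. (norm (D (\<lambda>x. flat_id (e n) (f x)) x - b (f x) *\<^sub>R D f x))\<^sup>2 =
          (norm (flat_id' (e n) (f x) *\<^sub>R D f x - b (f x) *\<^sub>R D f x))\<^sup>2"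
        using flat[of n, THEN conjunct2] by eventually_elim simp
    qed measurable
    moreover have "(\<lambda>n. \<integral>x. (norm (flat_id' (e n) (f x) *\<^sub>R D f x - b (f x) *\<^sub>R D f x))\<^sup>2 \<partial>M)
        \<longlonglongrightarrow> 0"
    proof (rule D_scaleR_L2_tendsto[OF f, where K=3])
      show "(\<lambda>n. flat_id' (e n) t) \<longlonglongrightarrow> b t" for t
        unfolding b_def by (rule flat_id'_tendsto[OF e_0])
    qed (simp_all add: flat_id'_bounds[OF e] b_def)
    ultimately show ?thesis by simp
  qed
  moreover have "sq_int M f" "vsq_int M G"
    using f Dom_square_integrable[OF f] D_square_integrable[OF f]
    by (auto simp: sq_int_def vsq_int_def G_def b_def intro: Bochner_Integration.integrable_bound)
  ultimately have "AE x in M. D f x = G x"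
    using closed_operator[of "\<lambda>n x. flat_id (e n) (f x)" f G] flat by blast
  then show ?thesis by eventually_elim (simp add: G_def b_def split: if_split_asm)
qed

lemma E01_bounded_id_tendsto:
  assumes g: "g \<in> Dom" and c: "c \<longlonglongrightarrow> 0"
  shows "(\<lambda>n. E01 M D (\<lambda>x. g x - bounded_id (c n) (g x))) \<longlonglongrightarrow> 0"
proof -
  have T: "(\<lambda>x. bounded_id (c n) (g x)) \<in> Dom"
    "AE x in M. D (\<lambda>x. bounded_id (c n) (g x)) x = bounded_id' (c n) (g x) *\<^sub>R D g x" for n
    using chain_rule[OF g bounded_id_has_real_derivative continuous_on_bounded_id' bounded_id'_bound
        bounded_id_0] by auto
  have diff: "(\<lambda>x. g x - bounded_id (c n) (g x)) \<in> Dom"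
    "AE x in M. D (\<lambda>x. g x - bounded_id (c n) (g x)) x = D g x - D (\<lambda>x. bounded_id (c n) (g x)) x" for n
    using Dom_diff[OF g T(1)] by auto
  have [measurable]: "D g \<in> borel_measurable M" "D (\<lambda>x. g x - bounded_id (c n) (g x)) \<in> borel_measurable M"
    for n using g diff(1) by (auto intro: D_borel_measurable)
  have "(\<integral>x. (norm (D (\<lambda>x. g x - bounded_id (c n) (g x)) x))\<^sup>2 \<partial>M) =
      (\<integral>x. (norm (bounded_id' (c n) (g x) *\<^sub>R D g x - 1 *\<^sub>R D g x))\<^sup>2 \<partial>M)" for n
  proof (rule integral_cong_AE)
    show "AE x in M. (norm (D (\<lambda>x. g x - bounded_id (c n) (g x)) x))\<^sup>2 =
        (norm (bounded_id' (c n) (g x) *\<^sub>R D g x - 1 *\<^sub>R D g x))\<^sup>2"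
      using diff(2)[of n] T(2)[of n] by eventually_elim (simp add: norm_minus_commute)
  qed (use g in measurable)
  moreover have "(\<lambda>n. \<integral>x. (norm (bounded_id' (c n) (g x) *\<^sub>R D g x - 1 *\<^sub>R D g x))\<^sup>2 \<partial>M) \<longlonglongrightarrow> 0"
    by (rule D_scaleR_L2_tendsto[OF g, where K=1]) (simp_all add: bounded_id'_bound bounded_id'_tendsto[OF c])
  moreover have "(\<lambda>n. \<integral>x. (bounded_id (c n) (g x) - g x)\<^sup>2 \<partial>M) \<longlonglongrightarrow> 0"
  proof (rule Dom_comp_L2_tendsto[OF g])
    show "\<bar>bounded_id (c n) t - t\<bar> \<le> \<bar>t\<bar>" for n t
      by (subst abs_minus_commute) (rule bounded_id_dist)
  qed (simp_all add: bounded_id_tendsto[OF c])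
  ultimately show ?thesis
    unfolding E01_tendsto_0_iff by (simp add: power2_commute)
qed

end

section \<open>Approximation in the \<open>E\<^sup>0\<^sub>1\<close> norm\<close>

definition E01_closure ::
  "'a measure \<Rightarrow> (('a \<Rightarrow> real) \<Rightarrow> ('a \<Rightarrow> 'h::{real_inner,banach,second_countable_topology})) \<Rightarrow>
    ('a \<Rightarrow> real) set \<Rightarrow> ('a \<Rightarrow> real) set" where
  "E01_closure M D S = {f. \<forall>\<epsilon>>0. \<exists>g\<in>S. E01 M D (\<lambda>x. f x - g x) < \<epsilon>}"

context closed_derivation
begin

lemma E01_closure_trans:
  assumes "f \<in> Dom" "S \<subseteq> Dom" "T \<subseteq> Dom"
    and "f \<in> E01_closure M D S" and "S \<subseteq> E01_closure M D T"
  shows "f \<in> E01_closure M D T"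
  unfolding E01_closure_def
proof (intro CollectI allI impI)
  fix \<epsilon> :: real assume "0 < \<epsilon>"
  then have "0 < \<epsilon> / 4" by simp
  then obtain g where g: "g \<in> S" "E01 M D (\<lambda>x. f x - g x) < \<epsilon> / 4"
    using assms(4) unfolding E01_closure_def by blast
  with \<open>0 < \<epsilon> / 4\<close> obtain p where p: "p \<in> T" "E01 M D (\<lambda>x. g x - p x) < \<epsilon> / 4"
    using assms(5) unfolding E01_closure_def by blast
  have "E01 M D (\<lambda>x. f x - p x) \<le> 2 * E01 M D (\<lambda>x. f x - g x) + 2 * E01 M D (\<lambda>x. g x - p x)"
    using assms(1-3) g(1) p(1) by (intro E01_triangle) auto
  with g p have "E01 M D (\<lambda>x. f x - p x) < \<epsilon>" by linarith
  with p show "\<exists>p\<in>T. E01 M D (\<lambda>x. f x - p x) < \<epsilon>" by blast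
qed

lemma E01_closure_mono: "S \<subseteq> T \<Longrightarrow> E01_closure M D S \<subseteq> E01_closure M D T"
  unfolding E01_closure_def by blast

lemma E01_closure_imp_sequence:
  assumes "f \<in> E01_closure M D S"
  obtains u where "\<And>j. u j \<in> S" and "(\<lambda>j. E01 M D (\<lambda>x. f x - u j x)) \<longlonglongrightarrow> 0"
proof -
  have "\<exists>g\<in>S. E01 M D (\<lambda>x. f x - g x) < inverse (real (Suc j))" for j
    using assms unfolding E01_closure_def by simp
  then obtain u where u: "\<And>j. u j \<in> S" "\<And>j. E01 M D (\<lambda>x. f x - u j x) < inverse (real (Suc j))"
    by metis
  have "0 \<le> E01 M D (\<lambda>x. f x - u j x)" "E01 M D (\<lambda>x. f x - u j x) \<le> inverse (real (Suc j))" for j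
    using E01_nonneg less_imp_le[OF u(2)] by blast+
  then have "(\<lambda>j. E01 M D (\<lambda>x. f x - u j x)) \<longlonglongrightarrow> 0"
    by (intro tendsto_sandwich[OF always_eventually always_eventually tendsto_const LIMSEQ_inverse_real_of_nat])
      blast+
  with u(1) show thesis by (rule that)
qed

lemma E01_closure_countable:
  fixes H :: "nat \<Rightarrow> 'a \<Rightarrow> real"
  assumes "\<And>n. H n \<in> E01_closure M D S"
  shows "\<exists>U :: nat \<Rightarrow> 'a \<Rightarrow> real. range U \<subseteq> S \<and> (\<forall>n. H n \<in> E01_closure M D (range U))"
proof -
  have "\<forall>n. \<exists>v. (\<forall>j. v j \<in> S) \<and> (\<lambda>j. E01 M D (\<lambda>x. H n x - v j x)) \<longlonglongrightarrow> 0"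
    using E01_closure_imp_sequence[OF assms] by blast
  from choice[OF this] obtain u where "\<forall>n. (\<forall>j. u n j \<in> S) \<and> (\<lambda>j. E01 M D (\<lambda>x. H n x - u n j x)) \<longlonglongrightarrow> 0"
    by blast
  then have u: "\<And>n j. u n j \<in> S" and lim: "\<And>n. (\<lambda>j. E01 M D (\<lambda>x. H n x - u n j x)) \<longlonglongrightarrow> 0"
    by auto
  define U where "U i = u (fst (prod_decode i)) (snd (prod_decode i))" for i
  have "H n \<in> E01_closure M D (range U)" for n
    unfolding E01_closure_def
  proof (intro CollectI allI impI)
    fix \<epsilon> :: real assume "0 < \<epsilon>"
    then obtain j where "E01 M D (\<lambda>x. H n x - u n j x) < \<epsilon>"
      using order_tendstoD(2)[OF lim[of n]] by (auto simp: eventually_sequentially)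
    then show "\<exists>p\<in>range U. E01 M D (\<lambda>x. H n x - p x) < \<epsilon>"
      by (intro bexI[where x="U (prod_encode (n, j))"] rangeI) (simp add: U_def)
  qed
  moreover have "range U \<subseteq> S" using u by (auto simp: U_def)
  ultimately show ?thesis by blast
qed

lemma E01_diff_tendsto_0D:
  assumes "f \<in> Dom" "\<And>j. u j \<in> Dom" and "(\<lambda>j. E01 M D (\<lambda>x. f x - u j x)) \<longlonglongrightarrow> 0"
  shows "(\<lambda>j. \<integral>x. (norm (D (u j) x - D f x))\<^sup>2 \<partial>M) \<longlonglongrightarrow> 0"
    and "(\<lambda>j. \<integral>x. (u j x - f x)\<^sup>2 \<partial>M) \<longlonglongrightarrow> 0"
proof -
  let ?I = "\<lambda>j. \<integral>x. (norm (D (u j) x - D f x))\<^sup>2 \<partial>M" and ?J = "\<lambda>j. \<integral>x. (u j x - f x)\<^sup>2 \<partial>M"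
  have lim: "(\<lambda>j. 2 * E01 M D (\<lambda>x. f x - u j x)) \<longlonglongrightarrow> 0"
    using tendsto_mult_right_zero[OF assms(3)] .
  have E: "E01 M D (\<lambda>x. f x - u j x) = 1/2 * ?I j + ?J j" for j
    using E01_diff[OF assms(1,2)] by (simp add: norm_minus_commute power2_commute)
  have "0 \<le> ?I j" "0 \<le> ?J j" for j
    by (simp_all add: integral_nonneg_AE)
  then have "norm (?I j) \<le> 2 * E01 M D (\<lambda>x. f x - u j x)"
    "norm (?J j) \<le> 2 * E01 M D (\<lambda>x. f x - u j x)" for j
    unfolding E by simp_all
  then show "?I \<longlonglongrightarrow> 0" "?J \<longlonglongrightarrow> 0"
    by (blast intro: Lim_null_comparison[OF always_eventually lim])+
qed

lemma E01_tendsto_AE_subseq: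
  assumes "f \<in> Dom" "\<And>j. u j \<in> Dom" and "(\<lambda>j. E01 M D (\<lambda>x. f x - u j x)) \<longlonglongrightarrow> 0"
  obtains r where "strict_mono r" and "AE x in M. (\<lambda>j. u (r j) x) \<longlonglongrightarrow> f x"
proof -
  have "integrable M (\<lambda>x. (u j x - f x)\<^sup>2)" for j
    using Dom_square_integrable[OF Dom_diff[OF assms(2) assms(1), THEN conjunct1]] .
  moreover have "(\<lambda>j. \<integral>x. norm ((u j x - f x)\<^sup>2) \<partial>M) \<longlonglongrightarrow> 0"
    using E01_diff_tendsto_0D(2)[OF assms] by simp
  ultimately obtain r where r: "strict_mono r" "AE x in M. (\<lambda>j. (u (r j) x - f x)\<^sup>2) \<longlonglongrightarrow> 0"
    using tendsto_L1_AE_subseq[of M "\<lambda>j x. (u j x - f x)\<^sup>2"] by blast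
  from r(2) have "AE x in M. (\<lambda>j. u (r j) x) \<longlonglongrightarrow> f x"
    by eventually_elim (simp add: LIM_zero_iff)
  with r(1) show thesis by (rule that)
qed

lemma bounded_id_cutoff_product:
  assumes "g \<in> Dom" "u \<in> Dom" "0 < c" "0 \<le> a"
  shows "(\<lambda>x. bounded_id c (g x) * cutoff a (u x)) \<in> Dom \<and>
    (AE x in M. D (\<lambda>x. bounded_id c (g x) * cutoff a (u x)) x =
      (bounded_id' c (g x) * cutoff a (u x)) *\<^sub>R D g x + (bounded_id c (g x) * cutoff' a (u x)) *\<^sub>R D u x)"
proof -
  define B where "B = 1 / c + 2 * a + 1"
  have "0 < 1 / c" using assms(3) by simp
  then have "\<bar>bounded_id c t\<bar> \<le> B" "\<bar>bounded_id' c t\<bar> \<le> B" "\<bar>cutoff a t\<bar> \<le> B" "\<bar>cutoff' a t\<bar> \<le> B"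
    for t
    using bounded_id_bound[OF assms(3), of t] bounded_id'_bound[of c t] cutoff_bounds[of a t]
      cutoff'_bound[OF assms(4), of t] assms(4)
    unfolding B_def by linarith+
  then show ?thesis
    by (intro chain_rule_product[OF assms(1,2) bounded_id_has_real_derivative continuous_on_bounded_id'
          cutoff_has_real_derivative continuous_on_cutoff' _ _ _ _ bounded_id_0])
qed

context
  fixes g H :: "'a \<Rightarrow> real" and A :: "'a set" and w :: "nat \<Rightarrow> 'a \<Rightarrow> real" and c :: real
  assumes g: "g \<in> Dom" and g_outside: "AE x in M. x \<notin> A \<longrightarrow> g x = 0"
    and H: "H \<in> Dom" and H_inside: "AE x in M. x \<in> A \<longrightarrow> 1 \<le> H x"
    and w: "\<And>j. w j \<in> Dom" and w_tendsto: "AE x in M. (\<lambda>j. w j x) \<longlonglongrightarrow> H x"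
    and D_w_tendsto: "(\<lambda>j. \<integral>x. (norm (D (w j) x - D H x))\<^sup>2 \<partial>M) \<longlonglongrightarrow> 0"
    and c: "0 < c"
begin

lemma cutoff_data_measurable [measurable]:
  "g \<in> borel_measurable M" "D g \<in> borel_measurable M" "H \<in> borel_measurable M"
  "D H \<in> borel_measurable M" "w j \<in> borel_measurable M" "D (w j) \<in> borel_measurable M"
  using g H w by (auto intro: Dom_borel_measurable D_borel_measurable)

text \<open>Where \<open>g \<noteq> 0\<close> we have \<open>H \<ge> 1\<close>, so \<open>cutoff 4\<close> is flat and equal to \<open>1\<close> near \<open>H\<close>;
  where \<open>g = 0\<close> also \<open>D g = 0\<close>.\<close>

lemma cutoff_at_limit:
  "AE x in M. bounded_id c (g x) * (1 - cutoff 4 (H x)) = 0 \<and> bounded_id c (g x) * cutoff' 4 (H x) = 0 \<and>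
    (1 - cutoff 4 (H x)) *\<^sub>R D g x = 0"
  using g_outside H_inside D_eq_0_where_zero[OF g]
proof eventually_elim
  case (elim x)
  show ?case
  proof (cases "x \<in> A")
    case True
    then have "2 \<le> 4 * H x" using elim by simp
    then show ?thesis by (simp add: cutoff_eq_1 cutoff'_eq_0)
  next
    case False
    then show ?thesis using elim by (simp add: bounded_id_0)
  qed
qed

lemma remainder_L2_tendsto_0:
  "(\<lambda>j. \<integral>x. (bounded_id c (g x) - bounded_id c (g x) * cutoff 4 (w j x))\<^sup>2 \<partial>M) \<longlonglongrightarrow> 0"
proof (rule integral_tendsto_0_dominated)
  show "integrable M (\<lambda>x. (g x)\<^sup>2)" by (rule Dom_square_integrable[OF g])
  show "AE x in M. \<bar>(bounded_id c (g x) - bounded_id c (g x) * cutoff 4 (w j x))\<^sup>2\<bar> \<le> (g x)\<^sup>2" for j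
  proof (rule AE_I2)
    fix x
    have "\<bar>bounded_id c (g x) - bounded_id c (g x) * cutoff 4 (w j x)\<bar> =
        \<bar>bounded_id c (g x)\<bar> * \<bar>1 - cutoff 4 (w j x)\<bar>"
      by (simp only: abs_mult[symmetric] right_diff_distrib mult_1_right)
    also have "\<dots> \<le> \<bar>g x\<bar> * 1"
      using bounded_id_abs_le cutoff_bounds[of 4 "w j x"] by (intro mult_mono) auto
    finally show "\<bar>(bounded_id c (g x) - bounded_id c (g x) * cutoff 4 (w j x))\<^sup>2\<bar> \<le> (g x)\<^sup>2"
      by (simp add: abs_le_square_iff)
  qed
  show "AE x in M. (\<lambda>j. (bounded_id c (g x) - bounded_id c (g x) * cutoff 4 (w j x))\<^sup>2) \<longlonglongrightarrow> 0"
    using w_tendsto cutoff_at_limit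
  proof eventually_elim
    case (elim x)
    have "(\<lambda>j. (bounded_id c (g x) - bounded_id c (g x) * cutoff 4 (w j x))\<^sup>2) \<longlonglongrightarrow>
        (bounded_id c (g x) - bounded_id c (g x) * cutoff 4 (H x))\<^sup>2"
      by (intro tendsto_intros isCont_tendsto_compose[OF DERIV_isCont[OF cutoff_has_real_derivative] elim(1)])
    moreover have "(bounded_id c (g x) - bounded_id c (g x) * cutoff 4 (H x))\<^sup>2 = 0"
      using elim(2) by (simp add: right_diff_distrib)
    ultimately show ?case by (simp only:)
  qed
qed measurable

lemma D_remainder:
  "(\<lambda>x. bounded_id c (g x) - bounded_id c (g x) * cutoff 4 (w j x)) \<in> Dom \<and>
   (AE x in M. D (\<lambda>x. bounded_id c (g x) - bounded_id c (g x) * cutoff 4 (w j x)) x =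
      ((1 - cutoff 4 (w j x)) * bounded_id' c (g x)) *\<^sub>R D g x -
      (bounded_id c (g x) * cutoff' 4 (w j x)) *\<^sub>R D (w j) x)"
proof -
  have T: "(\<lambda>x. bounded_id c (g x)) \<in> Dom"
    "AE x in M. D (\<lambda>x. bounded_id c (g x)) x = bounded_id' c (g x) *\<^sub>R D g x"
    using chain_rule[OF g bounded_id_has_real_derivative continuous_on_bounded_id'
        bounded_id'_bound bounded_id_0] by auto
  have P: "(\<lambda>x. bounded_id c (g x) * cutoff 4 (w j x)) \<in> Dom"
    "AE x in M. D (\<lambda>x. bounded_id c (g x) * cutoff 4 (w j x)) x =
      (bounded_id' c (g x) * cutoff 4 (w j x)) *\<^sub>R D g x +
      (bounded_id c (g x) * cutoff' 4 (w j x)) *\<^sub>R D (w j) x"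
    using bounded_id_cutoff_product[OF g w c, of 4] by auto
  have "AE x in M. D (\<lambda>x. bounded_id c (g x) - bounded_id c (g x) * cutoff 4 (w j x)) x =
      D (\<lambda>x. bounded_id c (g x)) x - D (\<lambda>x. bounded_id c (g x) * cutoff 4 (w j x)) x"
    using Dom_diff[OF T(1) P(1)] by blast
  with T(2) P(2) have "AE x in M. D (\<lambda>x. bounded_id c (g x) - bounded_id c (g x) * cutoff 4 (w j x)) x =
      ((1 - cutoff 4 (w j x)) * bounded_id' c (g x)) *\<^sub>R D g x -
      (bounded_id c (g x) * cutoff' 4 (w j x)) *\<^sub>R D (w j) x"
    by eventually_elim (simp add: algebra_simps)
  with Dom_diff[OF T(1) P(1)] show ?thesis by blast
qed

lemma cutoff'_term_L2_tendsto_0: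
  shows "integrable M (\<lambda>x. (norm ((bounded_id c (g x) * cutoff' 4 (w j x)) *\<^sub>R (D H x - D (w j) x)))\<^sup>2)"
    and "(\<lambda>j. \<integral>x. (norm ((bounded_id c (g x) * cutoff' 4 (w j x)) *\<^sub>R (D H x - D (w j) x)))\<^sup>2 \<partial>M)
      \<longlonglongrightarrow> 0"
proof -
  have bound: "(norm ((bounded_id c (g x) * cutoff' 4 (w j x)) *\<^sub>R (D H x - D (w j) x)))\<^sup>2 \<le>
      (8 / c)\<^sup>2 * (norm (D (w j) x - D H x))\<^sup>2" for j x
  proof -
    have "norm ((bounded_id c (g x) * cutoff' 4 (w j x)) *\<^sub>R (D H x - D (w j) x)) \<le>
        8 / c * norm (D (w j) x - D H x)"
      using mult_right_mono[OF bounded_id_mult_cutoff'_bound[OF c, of 4 "g x" "w j x"] norm_ge_zero]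
      by (simp add: norm_minus_commute)
    then show ?thesis by (simp add: power_mult_distrib[symmetric] power_mono)
  qed
  have int: "integrable M (\<lambda>x. (8 / c)\<^sup>2 * (norm (D (w j) x - D H x))\<^sup>2)" for j
    using D_diff_square_integrable[OF w H] by simp
  show int_lhs: "integrable M (\<lambda>x. (norm ((bounded_id c (g x) * cutoff' 4 (w j x)) *\<^sub>R (D H x - D (w j) x)))\<^sup>2)" for j
    by (rule Bochner_Integration.integrable_bound[OF int]) (use bound in \<open>auto intro!: AE_I2\<close>)
  have "norm (\<integral>x. (norm ((bounded_id c (g x) * cutoff' 4 (w j x)) *\<^sub>R (D H x - D (w j) x)))\<^sup>2 \<partial>M) \<le>
      (8 / c)\<^sup>2 * (\<integral>x. (norm (D (w j) x - D H x))\<^sup>2 \<partial>M)" for j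
  proof -
    have "(\<integral>x. (norm ((bounded_id c (g x) * cutoff' 4 (w j x)) *\<^sub>R (D H x - D (w j) x)))\<^sup>2 \<partial>M) \<le>
        (\<integral>x. (8 / c)\<^sup>2 * (norm (D (w j) x - D H x))\<^sup>2 \<partial>M)"
      using int_lhs int bound by (rule integral_mono)
    then show ?thesis by (simp add: integral_nonneg_AE)
  qed
  then show "(\<lambda>j. \<integral>x. (norm ((bounded_id c (g x) * cutoff' 4 (w j x)) *\<^sub>R (D H x - D (w j) x)))\<^sup>2 \<partial>M)
      \<longlonglongrightarrow> 0"
    by (intro Lim_null_comparison[OF always_eventually tendsto_mult_right_zero[OF D_w_tendsto]]) blast
qed

lemma cutoff_remainder_L2_tendsto_0:
  shows "integrable M (\<lambda>x. (norm (((1 - cutoff 4 (w j x)) * bounded_id' c (g x)) *\<^sub>R D g x -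
      (bounded_id c (g x) * cutoff' 4 (w j x)) *\<^sub>R D H x))\<^sup>2)"
    and "(\<lambda>j. \<integral>x. (norm (((1 - cutoff 4 (w j x)) * bounded_id' c (g x)) *\<^sub>R D g x -
      (bounded_id c (g x) * cutoff' 4 (w j x)) *\<^sub>R D H x))\<^sup>2 \<partial>M) \<longlonglongrightarrow> 0"
proof -
  let ?B = "\<lambda>j x. (norm (((1 - cutoff 4 (w j x)) * bounded_id' c (g x)) *\<^sub>R D g x -
      (bounded_id c (g x) * cutoff' 4 (w j x)) *\<^sub>R D H x))\<^sup>2"
  define W where "W x = 2 * (norm (D g x))\<^sup>2 + 2 * ((8 / c)\<^sup>2 * (norm (D H x))\<^sup>2)" for x
  have W: "integrable M W"
    unfolding W_def using D_square_integrable[OF g] D_square_integrable[OF H] by simp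
  have bound: "?B j x \<le> W x" for j x
  proof -
    have "\<bar>(1 - cutoff 4 (w j x)) * bounded_id' c (g x)\<bar> \<le> 1 * 1"
      unfolding abs_mult using cutoff_bounds[of 4 "w j x"] bounded_id'_bound[of c "g x"]
      by (intro mult_mono) auto
    from mult_right_mono[OF this norm_ge_zero[of "D g x"]]
      mult_right_mono[OF bounded_id_mult_cutoff'_bound[OF c, of 4 "g x" "w j x"] norm_ge_zero[of "D H x"]]
    have "norm (((1 - cutoff 4 (w j x)) * bounded_id' c (g x)) *\<^sub>R D g x -
        (bounded_id c (g x) * cutoff' 4 (w j x)) *\<^sub>R D H x) \<le> norm (D g x) + 8 / c * norm (D H x)"
      by (intro order_trans[OF norm_triangle_ineq4] add_mono) simp_all
    then have "?B j x \<le> (norm (D g x) + 8 / c * norm (D H x))\<^sup>2"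
      by (intro power_mono) auto
    from order_trans[OF this square_sum_le] show ?thesis
      by (simp only: W_def power_mult_distrib)
  qed
  show "integrable M (?B j)" for j
    by (rule Bochner_Integration.integrable_bound[OF W])
      (use bound in \<open>auto intro!: AE_I2 intro: order_trans[OF _ abs_ge_self]\<close>)
  show "(\<lambda>j. integral\<^sup>L M (?B j)) \<longlonglongrightarrow> 0"
  proof (rule integral_tendsto_0_dominated[OF _ W])
    show "AE x in M. \<bar>?B j x\<bar> \<le> W x" for j using bound by simp
    show "AE x in M. (\<lambda>j. ?B j x) \<longlonglongrightarrow> 0"
      using w_tendsto cutoff_at_limit
    proof eventually_elim
      case (elim x)
      have "isCont (cutoff 4) (H x)" "isCont (cutoff' 4) (H x)"
        using continuous_on_cutoff continuous_on_cutoff' by (simp_all add: continuous_on_eq_continuous_at)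
      then have "(\<lambda>j. ?B j x) \<longlonglongrightarrow> (norm (((1 - cutoff 4 (H x)) * bounded_id' c (g x)) *\<^sub>R D g x -
          (bounded_id c (g x) * cutoff' 4 (H x)) *\<^sub>R D H x))\<^sup>2"
        by (intro tendsto_intros isCont_tendsto_compose[OF _ elim(1)])
      moreover have "((1 - cutoff 4 (H x)) * bounded_id' c (g x)) *\<^sub>R D g x = 0"
        using elim(2) by (simp add: mult.commute)
      ultimately show ?case using elim(2) by simp
    qed
  qed measurable
qed

lemma E01_cutoff_remainder_tendsto_0:
  "(\<lambda>j. E01 M D (\<lambda>x. bounded_id c (g x) - bounded_id c (g x) * cutoff 4 (w j x))) \<longlonglongrightarrow> 0"
  unfolding E01_tendsto_0_iff
proof
  show "(\<lambda>j. \<integral>x. (norm (D (\<lambda>x. bounded_id c (g x) - bounded_id c (g x) * cutoff 4 (w j x)) x))\<^sup>2 \<partial>M)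
      \<longlonglongrightarrow> 0"
  proof (rule integral_norm_sq_tendsto_0_sum[OF _ _ cutoff'_term_L2_tendsto_0(1)
        cutoff_remainder_L2_tendsto_0(1) cutoff'_term_L2_tendsto_0(2) cutoff_remainder_L2_tendsto_0(2)])
    show "AE x in M. norm (D (\<lambda>x. bounded_id c (g x) - bounded_id c (g x) * cutoff 4 (w j x)) x) \<le>
        norm ((bounded_id c (g x) * cutoff' 4 (w j x)) *\<^sub>R (D H x - D (w j) x)) +
        norm (((1 - cutoff 4 (w j x)) * bounded_id' c (g x)) *\<^sub>R D g x -
          (bounded_id c (g x) * cutoff' 4 (w j x)) *\<^sub>R D H x)" for j
      using D_remainder[of j, THEN conjunct2]
    proof eventually_elim
      case (elim x)
      then show ?case
        by (simp only: elim) (rule order_trans[OF _ norm_triangle_ineq], simp add: algebra_simps)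
    qed
    show "integrable M (\<lambda>x. (norm (D (\<lambda>x. bounded_id c (g x) - bounded_id c (g x) * cutoff 4 (w j x)) x))\<^sup>2)"
      for j using D_remainder by (blast intro: D_square_integrable)
  qed
qed (rule remainder_L2_tendsto_0)

end


lemma in_E01_closure_bounded_id:
  assumes "g \<in> Dom"
  shows "g \<in> E01_closure M D {\<lambda>x. bounded_id c (g x) | c. 0 < c}"
  unfolding E01_closure_def
proof (intro CollectI allI impI)
  fix \<epsilon> :: real assume "0 < \<epsilon>"
  then obtain n where "E01 M D (\<lambda>x. g x - bounded_id (inverse (real (Suc n))) (g x)) < \<epsilon>"
    using order_tendstoD(2)[OF E01_bounded_id_tendsto[OF assms LIMSEQ_inverse_real_of_nat]]
    by (auto simp: eventually_sequentially)
  moreover have "0 < inverse (real (Suc n))" by simp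
  ultimately show "\<exists>h\<in>{\<lambda>x. bounded_id c (g x) | c. 0 < c}. E01 M D (\<lambda>x. g x - h x) < \<epsilon>"
    by (intro bexI[where x="\<lambda>x. bounded_id (inverse (real (Suc n))) (g x)"]) auto
qed

lemma bounded_id_in_E01_closure_cutoff:
  assumes g: "g \<in> Dom" "AE x in M. x \<notin> A \<longrightarrow> g x = 0"
    and H: "H \<in> Dom" "AE x in M. x \<in> A \<longrightarrow> 1 \<le> H x"
    and S: "S \<subseteq> Dom" "H \<in> E01_closure M D S" and c: "0 < c"
  shows "(\<lambda>x. bounded_id c (g x)) \<in> E01_closure M D ((\<lambda>u x. bounded_id c (g x) * cutoff 4 (u x)) ` S)"
proof -
  obtain u where u: "\<And>j. u j \<in> S" and lim: "(\<lambda>j. E01 M D (\<lambda>x. H x - u j x)) \<longlonglongrightarrow> 0"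
    using E01_closure_imp_sequence[OF S(2)] by blast
  have uD: "u j \<in> Dom" for j using u S(1) by blast
  obtain r where r: "strict_mono r" and "AE x in M. (\<lambda>j. u (r j) x) \<longlonglongrightarrow> H x"
    using E01_tendsto_AE_subseq[OF H(1) uD lim] by blast
  moreover have "(\<lambda>j. \<integral>x. (norm (D (u (r j)) x - D H x))\<^sup>2 \<partial>M) \<longlonglongrightarrow> 0"
    using LIMSEQ_subseq_LIMSEQ[OF E01_diff_tendsto_0D(1)[OF H(1) uD lim] r] by (simp add: comp_def)
  ultimately have lim': "(\<lambda>j. E01 M D (\<lambda>x. bounded_id c (g x) - bounded_id c (g x) * cutoff 4 (u (r j) x)))
      \<longlonglongrightarrow> 0"
    by (intro E01_cutoff_remainder_tendsto_0[OF g H uD _ _ c])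
  show ?thesis
    unfolding E01_closure_def
  proof (intro CollectI allI impI)
    fix \<epsilon> :: real assume "0 < \<epsilon>"
    then obtain j where "E01 M D (\<lambda>x. bounded_id c (g x) - bounded_id c (g x) * cutoff 4 (u (r j) x)) < \<epsilon>"
      using order_tendstoD(2)[OF lim'] by (auto simp: eventually_sequentially)
    then show "\<exists>p\<in>(\<lambda>u x. bounded_id c (g x) * cutoff 4 (u x)) ` S.
        E01 M D (\<lambda>x. bounded_id c (g x) - p x) < \<epsilon>"
      by (intro bexI[OF _ imageI[OF u[of "r j"]]]) simp
  qed
qed

lemma measurable_nest_approximants:
  assumes "measurable_nest M Dom D Es"
  shows "\<exists>(H :: nat \<Rightarrow> 'a \<Rightarrow> real) (U :: nat \<Rightarrow> 'a \<Rightarrow> real) m.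
    (\<forall>k. H k \<in> Dom \<and> (AE x in M. x \<in> Es k \<longrightarrow> 1 \<le> H k x)) \<and>
    (\<forall>i. U i \<in> Dom_on M Dom (Es (m i))) \<and> (\<forall>k. H k \<in> E01_closure M D (range U))"
proof -
  have "\<forall>k. \<exists>h. h \<in> Dom \<and> (AE x in M. x \<in> Es k \<longrightarrow> 1 \<le> h x)"
    and dense: "Dom \<subseteq> E01_closure M D (\<Union>k. Dom_on M Dom (Es k))"
    using assms unfolding measurable_nest_def E01_closure_def by blast+
  from choice[OF this(1)] obtain H
    where H: "\<And>k. H k \<in> Dom" "\<And>k. AE x in M. x \<in> Es k \<longrightarrow> 1 \<le> H k x"
    by blast
  from E01_closure_countable[of H, OF subsetD[OF dense H(1)]]
  obtain U :: "nat \<Rightarrow> 'a \<Rightarrow> real" where U: "range U \<subseteq> (\<Union>k. Dom_on M Dom (Es k))"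
    and H_closure: "\<And>k. H k \<in> E01_closure M D (range U)"
    by auto
  have "\<forall>i. \<exists>k. U i \<in> Dom_on M Dom (Es k)" using U by auto
  from choice[OF this] obtain m where "\<And>i. U i \<in> Dom_on M Dom (Es (m i))" by blast
  with H H_closure show ?thesis by blast
qed

end

section \<open>Refining a measurable nest\<close>

locale nest_refinement = closed_derivation M Dom D
  for M :: "'a measure" and Dom :: "('a \<Rightarrow> real) set"
    and D :: "('a \<Rightarrow> real) \<Rightarrow> ('a \<Rightarrow> 'h::{real_inner,banach,second_countable_topology})" +
  fixes Es :: "nat \<Rightarrow> 'a set" and H U :: "nat \<Rightarrow> 'a \<Rightarrow> real" and m :: "nat \<Rightarrow> nat"
  assumes nest: "measurable_nest M Dom D Es"
    and H: "\<And>k. H k \<in> Dom" "\<And>k. AE x in M. x \<in> Es k \<longrightarrow> 1 \<le> H k x"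
    and U: "\<And>i. U i \<in> Dom_on M Dom (Es (m i))"
    and H_closure: "\<And>k. H k \<in> E01_closure M D (range U)"
begin

definition level :: "nat \<Rightarrow> 'a \<Rightarrow> real" where
  "level k x = (\<Sum>i | i < k \<and> m i \<le> k. cutoff 8 (U i x))"

definition Ehat :: "nat \<Rightarrow> 'a set" where
  "Ehat k = {x \<in> space M. 1 \<le> level k x} \<inter> Es k"

definition chi :: "nat \<Rightarrow> 'a \<Rightarrow> real" where
  "chi k x = cutoff 2 (level k x)"

lemma Es_incseq: "incseq Es"
  and Es_sets: "Es k \<in> sets M"
  and Es_dense: "Dom \<subseteq> E01_closure M D (\<Union>k. Dom_on M Dom (Es k))"
  using nest unfolding measurable_nest_def E01_closure_def by blast+

lemma U_in_Dom: "U i \<in> Dom"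
  and U_outside: "AE x in M. x \<notin> Es (m i) \<longrightarrow> U i x = 0"
  using U[of i] unfolding Dom_on_def by auto

lemma level_in_Dom: "level k \<in> Dom"
proof -
  have "(\<lambda>x. \<Sum>i | i < k \<and> m i \<le> k. cutoff 8 (U i x)) \<in> Dom"
    by (intro Dom_sum cutoff_in_Dom U_in_Dom) auto
  then show ?thesis unfolding level_def[abs_def] .
qed

lemma level_Suc: "level k x \<le> level (Suc k) x"
  unfolding level_def
proof (rule sum_mono2)
  show "finite {i. i < Suc k \<and> m i \<le> Suc k}" by (rule finite_subset[of _ "{..<Suc k}"]) auto
qed (auto simp: cutoff_bounds)

lemma level_outside: "AE x in M. x \<notin> Es k \<longrightarrow> level k x = 0"
proof -
  have "AE x in M. \<forall>i\<in>{..<k}. x \<notin> Es (m i) \<longrightarrow> U i x = 0"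
    using U_outside by (subst AE_finite_all) auto
  then show ?thesis
  proof eventually_elim
    case (elim x)
    have "cutoff 8 (U i x) = 0" if "x \<notin> Es k" "i < k" "m i \<le> k" for i
    proof -
      have "x \<notin> Es (m i)" using that(1,3) incseqD[OF Es_incseq] by blast
      then show ?thesis using elim that(2) by (simp add: cutoff_eq_0)
    qed
    then show ?case unfolding level_def by auto
  qed
qed

lemma Ehat_subset: "Ehat k \<subseteq> Es k"
  unfolding Ehat_def by auto

lemma Ehat_sets: "Ehat k \<in> sets M"
proof -
  have [measurable]: "level k \<in> borel_measurable M" by (rule Dom_borel_measurable[OF level_in_Dom])
  have "{x \<in> space M. 1 \<le> level k x} \<in> sets M" by measurable
  then show ?thesis unfolding Ehat_def using Es_sets by auto
qed

lemma Ehat_incseq: "incseq Ehat"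
proof (rule incseq_SucI)
  fix k
  have "1 \<le> level k x \<Longrightarrow> 1 \<le> level (Suc k) x" for x using level_Suc[of k x] by linarith
  then show "Ehat k \<subseteq> Ehat (Suc k)"
    unfolding Ehat_def using incseqD[OF Es_incseq, of k "Suc k"] by auto
qed

lemma chi_properties:
  "chi k \<in> Dom" "0 \<le> chi k x" "chi k x \<le> 1" "x \<in> Ehat k \<Longrightarrow> chi k x = 1"
  "AE x in M. x \<notin> Es k \<longrightarrow> chi k x = 0"
proof -
  show "chi k \<in> Dom" unfolding chi_def[abs_def] by (intro cutoff_in_Dom level_in_Dom) simp
  show "0 \<le> chi k x" "chi k x \<le> 1" unfolding chi_def by (simp_all add: cutoff_bounds)
  show "x \<in> Ehat k \<Longrightarrow> chi k x = 1" unfolding chi_def Ehat_def by (simp add: cutoff_eq_1)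
  show "AE x in M. x \<notin> Es k \<longrightarrow> chi k x = 0"
    using level_outside[of k] by eventually_elim (simp add: chi_def cutoff_eq_0)
qed

text \<open>Where \<open>cutoff 4 (U i)\<close> is positive, \<open>cutoff 8 (U i) = 1\<close>, so \<open>level k \<ge> 1\<close> as soon as
  the \<open>i\<close>-th summand is present in \<open>level k\<close>.\<close>

lemma cutoff_support_in_Ehat:
  "AE x in M. cutoff 4 (U i x) \<noteq> 0 \<longrightarrow> x \<in> Ehat (max (Suc i) (m i))"
  using U_outside[of i] AE_space
proof eventually_elim
  case (elim x)
  let ?k = "max (Suc i) (m i)"
  show ?case
  proof
    assume "cutoff 4 (U i x) \<noteq> 0"
    then have U_pos: "1 < 4 * U i x" by (meson cutoff_eq_0 not_less)
    then have "x \<in> Es ?k" using elim incseqD[OF Es_incseq, of "m i" ?k] by auto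
    moreover have "cutoff 8 (U i x) \<le> level ?k x"
      unfolding level_def by (rule member_le_sum) (auto simp: cutoff_bounds)
    moreover have "cutoff 8 (U i x) = 1" using U_pos by (intro cutoff_eq_1) simp
    ultimately show "x \<in> Ehat ?k" using elim unfolding Ehat_def by auto
  qed
qed

lemma bounded_id_mult_cutoff_in_Dom_on:
  assumes "g \<in> Dom" "0 < c"
  shows "(\<lambda>x. bounded_id c (g x) * cutoff 4 (U i x)) \<in> Dom_on M Dom (Ehat (max (Suc i) (m i)))"
proof -
  have "AE x in M. x \<notin> Ehat (max (Suc i) (m i)) \<longrightarrow> bounded_id c (g x) * cutoff 4 (U i x) = 0"
    using cutoff_support_in_Ehat[of i] by eventually_elim auto
  with bounded_id_cutoff_product[OF assms(1) U_in_Dom assms(2), of 4] show ?thesis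
    unfolding Dom_on_def by simp
qed

lemma bounded_id_in_E01_closure_Ehat:
  assumes g: "g \<in> Dom_on M Dom (Es k)" and c: "0 < c"
  shows "(\<lambda>x. bounded_id c (g x)) \<in> E01_closure M D (\<Union>k. Dom_on M Dom (Ehat k))"
proof -
  have "(\<lambda>u x. bounded_id c (g x) * cutoff 4 (u x)) ` range U \<subseteq> (\<Union>k. Dom_on M Dom (Ehat k))"
    using g bounded_id_mult_cutoff_in_Dom_on[OF _ c] unfolding Dom_on_def by blast
  moreover have "range U \<subseteq> Dom" using U_in_Dom by blast
  ultimately show ?thesis
    using g bounded_id_in_E01_closure_cutoff[OF _ _ H(1)[of k] H(2)[of k] _ H_closure c] E01_closure_mono
    unfolding Dom_on_def by blast
qed

lemma measurable_nest_Ehat: "measurable_nest M Dom D Ehat"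
proof -
  define S where "S = (\<Union>k. Dom_on M Dom (Es k))"
  define T where "T = (\<Union>g\<in>S. {\<lambda>x. bounded_id c (g x) | c. 0 < c})"
  define R where "R = (\<Union>k. Dom_on M Dom (Ehat k))"
  have S_Dom: "S \<subseteq> Dom" and R_Dom: "R \<subseteq> Dom" unfolding S_def R_def Dom_on_def by auto
  have T_Dom: "T \<subseteq> Dom"
    unfolding T_def using S_Dom
    by (auto intro!: chain_rule[OF _ bounded_id_has_real_derivative continuous_on_bounded_id'
          bounded_id'_bound bounded_id_0, THEN conjunct1])
  have "S \<subseteq> E01_closure M D T"
    using S_Dom in_E01_closure_bounded_id E01_closure_mono[of _ T] unfolding T_def by blast
  moreover have "T \<subseteq> E01_closure M D R"
    unfolding T_def S_def R_def using bounded_id_in_E01_closure_Ehat by blast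
  ultimately have "Dom \<subseteq> E01_closure M D R"
    using Es_dense S_Dom T_Dom R_Dom unfolding S_def[symmetric] by (blast intro: E01_closure_trans)
  moreover have "\<exists>h\<in>Dom. AE x in M. x \<in> Ehat k \<longrightarrow> 1 \<le> h x" for k
  proof -
    have "AE x in M. x \<in> Ehat k \<longrightarrow> 1 \<le> H k x"
      using H(2)[of k] by eventually_elim (use Ehat_subset[of k] in blast)
    with H(1) show ?thesis by blast
  qed
  ultimately show ?thesis
    unfolding measurable_nest_def E01_closure_def R_def using Ehat_incseq Ehat_sets by blast
qed

end

theorem mainTheorem12:
  fixes M :: "'a measure" and Dom :: "('a \<Rightarrow> real) set"
    and D :: "('a \<Rightarrow> real) \<Rightarrow> ('a \<Rightarrow> 'h::{real_inner,banach,second_countable_topology})"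
    and Es :: "nat \<Rightarrow> 'a set"
  assumes "standing M Dom D"
    and "measurable_nest M Dom D Es"
  shows "\<exists>Ehat chi. measurable_nest M Dom D Ehat \<and>
           (\<forall>k. Ehat k \<subseteq> Es k \<and> chi k \<in> Dom \<and>
                (AE x in M. 0 \<le> chi k x \<and> chi k x \<le> 1) \<and>
                (AE x in M. x \<in> Ehat k \<longrightarrow> chi k x = 1) \<and>
                (AE x in M. x \<notin> Es k \<longrightarrow> chi k x = 0))"
proof -
  interpret closed_derivation M Dom D by (rule closed_derivation.intro) fact
  obtain H U :: "nat \<Rightarrow> 'a \<Rightarrow> real" and m where "\<And>k. H k \<in> Dom" "\<And>k. AE x in M. x \<in> Es k \<longrightarrow> 1 \<le> H k x"
    "\<And>i. U i \<in> Dom_on M Dom (Es (m i))" "\<And>k. H k \<in> E01_closure M D (range U)"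
    using measurable_nest_approximants[OF assms(2)] by blast
  with assms(2) interpret nest_refinement M Dom D Es H U m
    by unfold_locales
  have "\<forall>k. Ehat k \<subseteq> Es k \<and> chi k \<in> Dom \<and>
      (AE x in M. 0 \<le> chi k x \<and> chi k x \<le> 1) \<and>
      (AE x in M. x \<in> Ehat k \<longrightarrow> chi k x = 1) \<and>
      (AE x in M. x \<notin> Es k \<longrightarrow> chi k x = 0)"
    using Ehat_subset chi_properties by simp
  with measurable_nest_Ehat show ?thesis by blast
qed

end
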